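(* For any episodic tabular MDP as in the context, any non-negative mean rewards $r$ and any $L\in[H]$, let $t_L(h)=\max\{h-L+1,1\}$. Then $$\sup_{\mathcal D(r)}V^{L,*}(P,r)=\max_{\pi\in\Pi^{\mathcal M}}\sum_{(h,s,a)\in\mathcal X}r_h(s,a)\sum_{s'\in\mathcal S}d^{\pi}_{t_L(h)}(s')\,d_h^*(s\mid s_{t_L(h)}=s').$$
   Context: Episodic tabular MDP $(\mathcal S,\mathcal A,H,P,R,\mu)$: finite state space $\mathcal S$ with $|\mathcal S|=S$, finite action space $\mathcal A$ with $|\mathcal A|=A$, horizon $H\in\mathbb N$, transition kernels $P_h(\cdot\mid s,a)$, initial state distribution $\mu$, and random non-negative rewards $R_h(s,a)$ for $(h,s,a)\in\mathcal X:=[H]\times\mathcal S\times\mathcal A$. Initially $s_1\sim\mu$; at step $h$ the agent in state $s_h$ picks $a_h$, receives $R_h(s_h,a_h)$ and moves to $s_{h+1}\sim P_h(\cdot\mid s_h,a_h)$. All rewards are drawn before the interaction. The vectors $\mathcal R_h=\{R_h(s,a)\}_{s,a}$ for different $h$ are mutually independent (entries of one $\mathcal R_h$ may be arbitrarily correlated); rewards are independent of transitions, and transitions are independent across steps. Let $r_h(s,a)=\mathbb E[R_h(s,a)]$ and let $\mathcal D(r)$ denote the set of all such reward distributions with means $r$. For $L\in\{0,\dots,H\}$ an $L$-lookahead policy draws $a_h\sim\pi_h(\cdot\mid s_h,\mathcal R_h^L)$, where $\mathcal R_h^L=(\mathcal R_t)_{h\le t\le\min(h+L-1,H)}$ and $\mathcal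 R_h^0=\emptyset$; $\Pi^L$ is the set of these policies and $\Pi^{\mathcal M}=\Pi^0$ is the set of (possibly randomized) Markovian policies. The value is $V^{L,\pi}(P,r)=\mathbb E[\sum_{h=1}^H R_h(s_h,a_h)]$, and $V^{L,*}(P,r)=\sup_{\pi\in\Pi^L}V^{L,\pi}(P,r)$. Occupancy measures: $d_h^\pi(s)=\Pr(s_h=s)$ under $\pi$. For $t\le h$, $d_h^\pi(s\mid s_t=s')$ is the probability of being at $s$ at step $h$ when at $s'$ at step $t$ and following $\pi$, and $d_h^*(s\mid s_t=s')=\max_{\pi\in\Pi^{\mathcal M}}d_h^\pi(s\mid s_t=s')$. In particular $d_h^*(s\mid s_h=s')=\mathbb 1\{s=s'\}$. *)

theory Defs
  imports "HOL-Probability.Probability"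
begin

(* Conventions:
   steps are h \<in> {1..H}; states type 's::finite, actions type 'a::finite;
   P h s a s' = P_h(s' | s,a);  mu s = initial distribution;
   a reward table is a function R :: nat \<Rightarrow> 's \<Rightarrow> 'a \<Rightarrow> real, R h s a = R_h(s,a);
   a (randomized) decision rule  dec :: nat \<Rightarrow> 's \<Rightarrow> 'a \<Rightarrow> real  gives dec h s a = Pr(a_h = a | s_h = s). *)

text \<open>Distribution of the state at step t+k, starting from state distribution nu at step t
  and following the decision rule dec.\<close>
primrec flow :: "(nat \<Rightarrow> 's::finite \<Rightarrow> 'a::finite \<Rightarrow> 's \<Rightarrow> real) \<Rightarrow> (nat \<Rightarrow> 's \<Rightarrow> 'a \<Rightarrow> real)
    \<Rightarrow> nat \<Rightarrow> ('s \<Rightarrow> real) \<Rightarrow> nat \<Rightarrow> 's \<Rightarrow> real" where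
  "flow P dec t nu 0 = nu"
| "flow P dec t nu (Suc k) =
     (\<lambda>s'. \<Sum>s\<in>UNIV. \<Sum>a\<in>UNIV. flow P dec t nu k s * dec (t + k) s a * P (t + k) s a s')"

definition markov_policy :: "nat \<Rightarrow> (nat \<Rightarrow> 's::finite \<Rightarrow> 'a::finite \<Rightarrow> real) \<Rightarrow> bool" where
  "markov_policy H \<pi> \<longleftrightarrow>
     (\<forall>h\<in>{1..H}. \<forall>s. (\<forall>a. 0 \<le> \<pi> h s a) \<and> (\<Sum>a\<in>UNIV. \<pi> h s a) = 1)"

text \<open>Occupancy measure d_h^pi(s) = Pr(s_h = s).\<close>
definition occ :: "(nat \<Rightarrow> 's::finite \<Rightarrow> 'a::finite \<Rightarrow> 's \<Rightarrow> real) \<Rightarrow> ('s \<Rightarrow> real)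
    \<Rightarrow> (nat \<Rightarrow> 's \<Rightarrow> 'a \<Rightarrow> real) \<Rightarrow> nat \<Rightarrow> 's \<Rightarrow> real" where
  "occ P mu \<pi> h s = flow P \<pi> 1 mu (h - 1) s"

text \<open>Conditional occupancy d_h^pi(s | s_t = s'), for t \<le> h.\<close>
definition cocc :: "(nat \<Rightarrow> 's::finite \<Rightarrow> 'a::finite \<Rightarrow> 's \<Rightarrow> real)
    \<Rightarrow> (nat \<Rightarrow> 's \<Rightarrow> 'a \<Rightarrow> real) \<Rightarrow> nat \<Rightarrow> 's \<Rightarrow> nat \<Rightarrow> 's \<Rightarrow> real" where
  "cocc P \<pi> t s' h s = flow P \<pi> t (\<lambda>x. if x = s' then 1 else 0) (h - t) s"

text \<open>d_h^*(s | s_t = s') = max over Markovian policies (written as Sup; the max is attained).\<close>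
definition dstar :: "(nat \<Rightarrow> 's::finite \<Rightarrow> 'a::finite \<Rightarrow> 's \<Rightarrow> real) \<Rightarrow> nat
    \<Rightarrow> nat \<Rightarrow> 's \<Rightarrow> nat \<Rightarrow> 's \<Rightarrow> real" where
  "dstar P H t s' h s = Sup {cocc P \<pi> t s' h s | \<pi>. markov_policy H \<pi>}"

text \<open>Lookahead window R_h^L = (R_t)_{h \<le> t \<le> min(h+L-1,H)}; entries outside are masked by 0.\<close>
definition window :: "nat \<Rightarrow> nat \<Rightarrow> nat \<Rightarrow> (nat \<Rightarrow> 's \<Rightarrow> 'a \<Rightarrow> real) \<Rightarrow> (nat \<Rightarrow> 's \<Rightarrow> 'a \<Rightarrow> real)" where
  "window L H h R = (\<lambda>t. if h \<le> t \<and> t \<le> min (h + L - 1) H then R t else (\<lambda>_ _. 0))"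

text \<open>Joint law of the reward tables (R_1,...,R_H): independent across steps,
  with step-h law D h (a law on the whole vector R_h, arbitrary correlations inside).\<close>
definition reward_law :: "nat \<Rightarrow> (nat \<Rightarrow> ('s \<Rightarrow> 'a \<Rightarrow> real) measure) \<Rightarrow> (nat \<Rightarrow> 's \<Rightarrow> 'a \<Rightarrow> real) measure" where
  "reward_law H D = PiM {1..H} D"

definition reward_dists :: "nat \<Rightarrow> (nat \<Rightarrow> 's::finite \<Rightarrow> 'a::finite \<Rightarrow> real)
    \<Rightarrow> (nat \<Rightarrow> ('s \<Rightarrow> 'a \<Rightarrow> real) measure) set" where
  "reward_dists H r = {D. \<forall>h\<in>{1..H}. prob_space (D h) \<and> sets (D h) = sets borel \<and>
      (AE R in D h. \<forall>s a. 0 \<le> R s a) \<and>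
      (\<forall>s a. integrable (D h) (\<lambda>R. R s a) \<and> (\<integral>R. R s a \<partial>D h) = r h s a)}"

text \<open>L-lookahead policies: pol h s W a = pi_h(a | s, W), applied to W = R_h^L;
  measurability in the rewards is required so that the value is well defined.\<close>
definition lookahead_policies :: "nat \<Rightarrow> nat \<Rightarrow> (nat \<Rightarrow> ('s::finite \<Rightarrow> 'a::finite \<Rightarrow> real) measure)
    \<Rightarrow> (nat \<Rightarrow> 's \<Rightarrow> (nat \<Rightarrow> 's \<Rightarrow> 'a \<Rightarrow> real) \<Rightarrow> 'a \<Rightarrow> real) set" where
  "lookahead_policies H L D = {pol.
      (\<forall>h\<in>{1..H}. \<forall>s W. (\<forall>a. 0 \<le> pol h s W a) \<and> (\<Sum>a\<in>UNIV. pol h s W a) = 1) \<and>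
      (\<forall>h\<in>{1..H}. \<forall>s a. (\<lambda>R. pol h s (window L H h R) a) \<in> borel_measurable (reward_law H D))}"

text \<open>V^{L,pi}(P,r) = E[ sum_h R_h(s_h,a_h) ]: conditionally on the reward realisation R,
  the expected reward collected is computed via the state distributions at each step.\<close>
definition lookahead_value :: "(nat \<Rightarrow> 's::finite \<Rightarrow> 'a::finite \<Rightarrow> 's \<Rightarrow> real) \<Rightarrow> ('s \<Rightarrow> real)
    \<Rightarrow> nat \<Rightarrow> nat \<Rightarrow> (nat \<Rightarrow> ('s \<Rightarrow> 'a \<Rightarrow> real) measure)
    \<Rightarrow> (nat \<Rightarrow> 's \<Rightarrow> (nat \<Rightarrow> 's \<Rightarrow> 'a \<Rightarrow> real) \<Rightarrow> 'a \<Rightarrow> real) \<Rightarrow> real" where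
  "lookahead_value P mu H L D pol =
     (\<integral>R. (let dec = (\<lambda>h s. pol h s (window L H h R)) in
            \<Sum>h\<in>{1..H}. \<Sum>s\<in>UNIV. \<Sum>a\<in>UNIV. flow P dec 1 mu (h - 1) s * dec h s a * R h s a)
        \<partial>reward_law H D)"

definition opt_lookahead_value :: "(nat \<Rightarrow> 's::finite \<Rightarrow> 'a::finite \<Rightarrow> 's \<Rightarrow> real) \<Rightarrow> ('s \<Rightarrow> real)
    \<Rightarrow> nat \<Rightarrow> nat \<Rightarrow> (nat \<Rightarrow> ('s \<Rightarrow> 'a \<Rightarrow> real) measure) \<Rightarrow> ereal" where
  "opt_lookahead_value P mu H L D =
     (SUP pol\<in>lookahead_policies H L D. ereal (lookahead_value P mu H L D pol))"

definition tL :: "nat \<Rightarrow> nat \<Rightarrow> nat" where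
  "tL L h = max (h + 1 - L) 1"

end

theory Submission
  imports Defs
begin

text \<open>
  The right-hand side is the value of a Markovian planning problem: from state s' at step tL L h
  the reward at (h, s) is reached with probability at most d*_h(s | s'), and grouping the steps h
  by tL L h turns the objective into an ordinary finite-horizon reward, which dynamic programming
  maximises.

  Upper bound: for a fixed reward realisation, a lookahead agent decides before step tL L h without
  seeing R_h, so it is in s at step h with probability at most sum_s' d_{tL L h}(s') d*_h(s | s'),
  where d_{tL L h} does not depend on R_h. By independence R_h(s, a) can then be replaced by its
  mean, leaving the planning objective of a Markovian policy.

  Lower bound: let every step carry no reward with probability 1 - \<epsilon>, and otherwise put its whole
  mean, scaled by |S x A| / \<epsilon>, on one uniformly chosen pair (s, a). On the event that only step h
  shows a reward, at (s, a), the agent that follows the planning policy until the reward comes into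
  view and then heads for it is at (h, s) with the planning probability. The event has probability
  (\<epsilon> / |S x A|) (1 - \<epsilon>)^(H-1), so the expected return is at least (1 - \<epsilon>)^(H-1) times the
  planning value, and \<epsilon> tends to 0.
\<close>

lemma sum_rotate3:
  "(\<Sum>x\<in>A. \<Sum>y\<in>B. \<Sum>z\<in>C. f x y z) = (\<Sum>y\<in>B. \<Sum>z\<in>C. \<Sum>x\<in>A. f x y z)"
proof -
  have "(\<Sum>x\<in>A. \<Sum>y\<in>B. \<Sum>z\<in>C. f x y z) = (\<Sum>y\<in>B. \<Sum>x\<in>A. \<Sum>z\<in>C. f x y z)"
    by (rule sum.swap)
  also have "\<dots> = (\<Sum>y\<in>B. \<Sum>z\<in>C. \<Sum>x\<in>A. f x y z)"
    by (intro sum.cong refl sum.swap)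
  finally show ?thesis .
qed

lemma sum_point_mass_left: "(\<Sum>x\<in>UNIV. (if x = s then 1 else (0::real)) * f x) = f (s::'s::finite)"
proof -
  have "(\<Sum>x\<in>UNIV. (if x = s then 1 else (0::real)) * f x) = (\<Sum>x\<in>UNIV. if x = s then f x else 0)"
    by (rule sum.cong) auto
  then show ?thesis by simp
qed

lemma sum_point_mass_right: "(\<Sum>x\<in>UNIV. f x * (if x = s then 1 else (0::real))) = f (s::'s::finite)"
  by (simp add: if_distrib cong: if_cong)

lemma flow_cong:
  assumes "\<And>k. k < n \<Longrightarrow> dec (t + k) = dec' (t + k)"
  shows "flow P dec t \<nu> n = flow P dec' t \<nu> n"
  using assms by (induction n) auto

lemma flow_nonneg:
  assumes "\<And>s. 0 \<le> \<nu> s"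
    and "\<And>k s a. k < n \<Longrightarrow> 0 \<le> dec (t + k) s a"
    and "\<And>k s a s'. k < n \<Longrightarrow> 0 \<le> P (t + k) s a s'"
  shows "0 \<le> flow P dec t \<nu> n s"
  using assms by (induction n arbitrary: s) (auto intro!: sum_nonneg mult_nonneg_nonneg)

lemma sum_flow:
  assumes "\<And>k s. k < n \<Longrightarrow> (\<Sum>a\<in>UNIV. dec (t + k) s a) = 1"
    and "\<And>k s a. k < n \<Longrightarrow> (\<Sum>s'\<in>UNIV. P (t + k) s a s') = 1"
  shows "(\<Sum>s\<in>UNIV. flow P dec t \<nu> n s) = (\<Sum>s\<in>UNIV. \<nu> s)"
  using assms
proof (induction n)
  case 0
  then show ?case by simp
next
  case (Suc n)
  have "(\<Sum>s'\<in>UNIV. flow P dec t \<nu> (Suc n) s')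
      = (\<Sum>s'\<in>UNIV. \<Sum>s\<in>UNIV. \<Sum>a\<in>UNIV. flow P dec t \<nu> n s * dec (t + n) s a * P (t + n) s a s')"
    by simp
  also have "\<dots> = (\<Sum>s\<in>UNIV. \<Sum>a\<in>UNIV. \<Sum>s'\<in>UNIV. flow P dec t \<nu> n s * dec (t + n) s a * P (t + n) s a s')"
    by (rule sum_rotate3)
  also have "\<dots> = (\<Sum>s\<in>UNIV. flow P dec t \<nu> n s * (\<Sum>a\<in>UNIV. dec (t + n) s a))"
    using Suc.prems(2)[of n] by (simp add: sum_distrib_left[symmetric] sum_distrib_right)
  also have "\<dots> = (\<Sum>s\<in>UNIV. flow P dec t \<nu> n s)"
    using Suc.prems(1)[of n] by simp
  finally show ?case using Suc by simp
qed

lemma flow_add: "flow P dec t \<nu> (m + n) = flow P dec (t + m) (flow P dec t \<nu> m) n"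
  by (induction n) (auto simp: add.assoc)

lemma flow_eq_sum_point_mass:
  "flow P dec t \<nu> n s = (\<Sum>x\<in>UNIV. \<nu> x * flow P dec t (\<lambda>y. if y = x then 1 else 0) n s)"
proof (induction n arbitrary: s)
  case 0
  then show ?case by (simp add: if_distrib cong: if_cong)
next
  case (Suc n)
  let ?\<delta> = "\<lambda>x y. if y = x then 1 else (0::real)"
  have "flow P dec t \<nu> (Suc n) s = (\<Sum>s0\<in>UNIV. \<Sum>a\<in>UNIV. \<Sum>x\<in>UNIV.
      \<nu> x * (flow P dec t (?\<delta> x) n s0 * dec (t + n) s0 a * P (t + n) s0 a s))"
    by (simp add: Suc sum_distrib_right mult.assoc)
  also have "\<dots> = (\<Sum>x\<in>UNIV. \<Sum>s0\<in>UNIV. \<Sum>a\<in>UNIV.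
      \<nu> x * (flow P dec t (?\<delta> x) n s0 * dec (t + n) s0 a * P (t + n) s0 a s))"
    by (rule sum_rotate3[symmetric])
  also have "\<dots> = (\<Sum>x\<in>UNIV. \<nu> x * flow P dec t (?\<delta> x) (Suc n) s)"
    by (simp add: sum_distrib_left)
  finally show ?case .
qed

lemma flow_eq_sum_occ_cocc:
  assumes "1 \<le> t" "t \<le> h"
  shows "flow P \<pi> 1 \<mu> (h - 1) s = (\<Sum>x\<in>UNIV. flow P \<pi> 1 \<mu> (t - 1) x * cocc P \<pi> t x h s)"
proof -
  have "flow P \<pi> 1 \<mu> (h - 1) s = flow P \<pi> t (flow P \<pi> 1 \<mu> (t - 1)) (h - t) s"
    using assms flow_add[of P \<pi> 1 \<mu> "t - 1" "h - t"] by simp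
  also have "\<dots> = (\<Sum>x\<in>UNIV. flow P \<pi> 1 \<mu> (t - 1) x * cocc P \<pi> t x h s)"
    by (subst flow_eq_sum_point_mass) (simp add: cocc_def)
  finally show ?thesis .
qed

definition q_value :: "(nat \<Rightarrow> 's::finite \<Rightarrow> 'a::finite \<Rightarrow> 's \<Rightarrow> real) \<Rightarrow> nat \<Rightarrow> ('s \<Rightarrow> real)
    \<Rightarrow> 's \<Rightarrow> 'a \<Rightarrow> real" where
  "q_value P k V x a = (\<Sum>y\<in>UNIV. P k x a y * V y)"

definition greedy_action :: "(nat \<Rightarrow> 's::finite \<Rightarrow> 'a::finite \<Rightarrow> 's \<Rightarrow> real) \<Rightarrow> nat \<Rightarrow> ('s \<Rightarrow> real)
    \<Rightarrow> 's \<Rightarrow> 'a" where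
  "greedy_action P k V x = (SOME a. \<forall>b. q_value P k V x b \<le> q_value P k V x a)"

definition max_q_value :: "(nat \<Rightarrow> 's::finite \<Rightarrow> 'a::finite \<Rightarrow> 's \<Rightarrow> real) \<Rightarrow> nat \<Rightarrow> ('s \<Rightarrow> real)
    \<Rightarrow> 's \<Rightarrow> real" where
  "max_q_value P k V x = q_value P k V x (greedy_action P k V x)"

(* greedy_policy P W acts at step k greedily for the value W k of the state reached at step k + 1. *)
definition greedy_policy :: "(nat \<Rightarrow> 's::finite \<Rightarrow> 'a::finite \<Rightarrow> 's \<Rightarrow> real) \<Rightarrow> (nat \<Rightarrow> 's \<Rightarrow> real)
    \<Rightarrow> nat \<Rightarrow> 's \<Rightarrow> 'a \<Rightarrow> real" where
  "greedy_policy P W k x a = (if a = greedy_action P k (W k) x then 1 else 0)"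

lemma q_value_le_max_q_value: "q_value P k V x b \<le> max_q_value P k V x"
proof -
  let ?f = "q_value P k V x"
  have "Max (range ?f) \<in> range ?f"
    by (intro Max_in) auto
  then obtain a where "?f a = Max (range ?f)"
    by (metis rangeE)
  then have "\<forall>b. ?f b \<le> ?f a" by simp
  then have "\<forall>b. ?f b \<le> ?f (greedy_action P k V x)"
    unfolding greedy_action_def by (rule someI)
  then show ?thesis unfolding max_q_value_def by blast
qed

lemma markov_policy_greedy_policy: "markov_policy H (greedy_policy P W)"
  unfolding markov_policy_def greedy_policy_def by simp

lemma greedy_policy_nonneg: "0 \<le> greedy_policy P W k x a"
  and sum_greedy_policy: "(\<Sum>a\<in>UNIV. greedy_policy P W k x a) = 1"
  unfolding greedy_policy_def by simp_all

lemma sum_greedy_policy_mult: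
  "(\<Sum>a\<in>UNIV. greedy_policy P W k x a * f a) = f (greedy_action P k (W k) x)"
  unfolding greedy_policy_def by (rule sum_point_mass_left)

lemma sum_flow_Suc:
  "(\<Sum>x\<in>UNIV. flow P dec t \<nu> (Suc n) x * V x) =
   (\<Sum>x\<in>UNIV. flow P dec t \<nu> n x * (\<Sum>a\<in>UNIV. dec (t + n) x a * q_value P (t + n) V x a))"
proof -
  have "(\<Sum>x\<in>UNIV. flow P dec t \<nu> (Suc n) x * V x) = (\<Sum>x\<in>UNIV. \<Sum>s\<in>UNIV. \<Sum>a\<in>UNIV.
      flow P dec t \<nu> n s * dec (t + n) s a * (P (t + n) s a x * V x))"
    by (simp add: sum_distrib_right mult.assoc)
  also have "\<dots> = (\<Sum>s\<in>UNIV. \<Sum>a\<in>UNIV. \<Sum>x\<in>UNIV.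
      flow P dec t \<nu> n s * dec (t + n) s a * (P (t + n) s a x * V x))"
    by (rule sum_rotate3)
  finally show ?thesis by (simp add: q_value_def sum_distrib_left mult.assoc)
qed

lemma sum_flow_Suc_le:
  assumes "\<And>x a. 0 \<le> dec (t + n) x a" "\<And>x. (\<Sum>a\<in>UNIV. dec (t + n) x a) = 1"
    and "\<And>x. 0 \<le> flow P dec t \<nu> n x"
  shows "(\<Sum>x\<in>UNIV. flow P dec t \<nu> (Suc n) x * V x)
    \<le> (\<Sum>x\<in>UNIV. flow P dec t \<nu> n x * max_q_value P (t + n) V x)"
  unfolding sum_flow_Suc
proof (intro sum_mono mult_left_mono)
  fix x
  have "(\<Sum>a\<in>UNIV. dec (t + n) x a * q_value P (t + n) V x a)
      \<le> (\<Sum>a\<in>UNIV. dec (t + n) x a * max_q_value P (t + n) V x)"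
    by (intro sum_mono mult_left_mono q_value_le_max_q_value assms)
  also have "\<dots> = max_q_value P (t + n) V x"
    using assms(2)[of x] by (simp add: sum_distrib_right[symmetric])
  finally show "(\<Sum>a\<in>UNIV. dec (t + n) x a * q_value P (t + n) V x a) \<le> max_q_value P (t + n) V x" .
qed (use assms in auto)

lemma sum_flow_Suc_greedy:
  assumes "W (t + n) = V"
  shows "(\<Sum>x\<in>UNIV. flow P (greedy_policy P W) t \<nu> (Suc n) x * V x)
    = (\<Sum>x\<in>UNIV. flow P (greedy_policy P W) t \<nu> n x * max_q_value P (t + n) V x)"
  unfolding sum_flow_Suc sum_greedy_policy_mult max_q_value_def assms ..

lemma markov_policy_nonneg: "markov_policy H \<pi> \<Longrightarrow> k \<in> {1..H} \<Longrightarrow> 0 \<le> \<pi> k x a"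
  and sum_markov_policy: "markov_policy H \<pi> \<Longrightarrow> k \<in> {1..H} \<Longrightarrow> (\<Sum>a\<in>UNIV. \<pi> k x a) = 1"
  unfolding markov_policy_def by blast+

lemma markov_policy_le_1: "markov_policy H \<pi> \<Longrightarrow> k \<in> {1..H} \<Longrightarrow> \<pi> k x a \<le> 1"
  using member_le_sum[of a UNIV "\<pi> k x"] markov_policy_nonneg[of H \<pi> k x] sum_markov_policy[of H \<pi> k x]
  by auto

lemma tL_bounds: "1 \<le> L \<Longrightarrow> 1 \<le> h \<Longrightarrow> tL L h \<le> h" "1 \<le> tL L h"
  unfolding tL_def by auto

lemma tL_in_range: "1 \<le> L \<Longrightarrow> h \<in> {1..H} \<Longrightarrow> tL L h \<in> {1..H}"
  unfolding tL_def by auto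

(* max_reach_prob P h s m x is the largest probability of being in s at step h
   when starting from x at step h - m. *)
fun max_reach_prob :: "(nat \<Rightarrow> 's::finite \<Rightarrow> 'a::finite \<Rightarrow> 's \<Rightarrow> real) \<Rightarrow> nat \<Rightarrow> 's \<Rightarrow> nat \<Rightarrow> 's \<Rightarrow> real" where
  "max_reach_prob P h s 0 = (\<lambda>x. if x = s then 1 else 0)"
| "max_reach_prob P h s (Suc m) = max_q_value P (h - Suc m) (max_reach_prob P h s m)"

definition reach_policy :: "(nat \<Rightarrow> 's::finite \<Rightarrow> 'a::finite \<Rightarrow> 's \<Rightarrow> real) \<Rightarrow> nat \<Rightarrow> 's
    \<Rightarrow> nat \<Rightarrow> 's \<Rightarrow> 'a \<Rightarrow> real" where
  "reach_policy P h s = greedy_policy P (\<lambda>k. max_reach_prob P h s (h - Suc k))"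

lemma sum_flow_max_reach_prob_le:
  assumes "t + n + m = h" "\<And>x. 0 \<le> \<nu> x"
    and "\<And>k x a. k < n \<Longrightarrow> 0 \<le> \<pi> (t + k) x a" "\<And>k x. k < n \<Longrightarrow> (\<Sum>a\<in>UNIV. \<pi> (t + k) x a) = 1"
    and "\<And>k x a y. k < n \<Longrightarrow> 0 \<le> P (t + k) x a y"
  shows "(\<Sum>x\<in>UNIV. flow P \<pi> t \<nu> n x * max_reach_prob P h s m x)
    \<le> (\<Sum>x\<in>UNIV. \<nu> x * max_reach_prob P h s (n + m) x)"
  using assms
proof (induction n arbitrary: m)
  case 0
  then show ?case by simp
next
  case (Suc n)
  have "h - Suc m = t + n"
    using Suc.prems by auto
  moreover have "0 \<le> flow P \<pi> t \<nu> n x" for x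
    by (rule flow_nonneg) (use Suc.prems in auto)
  ultimately have "(\<Sum>x\<in>UNIV. flow P \<pi> t \<nu> (Suc n) x * max_reach_prob P h s m x)
      \<le> (\<Sum>x\<in>UNIV. flow P \<pi> t \<nu> n x * max_reach_prob P h s (Suc m) x)"
    using sum_flow_Suc_le[of \<pi> t n P \<nu> "max_reach_prob P h s m"] Suc.prems by auto
  also have "\<dots> \<le> (\<Sum>x\<in>UNIV. \<nu> x * max_reach_prob P h s (n + Suc m) x)"
    by (rule Suc.IH) (use Suc.prems in auto)
  finally show ?case by simp
qed

lemma sum_flow_reach_policy:
  assumes "t + n + m = h"
  shows "(\<Sum>x\<in>UNIV. flow P (reach_policy P h s) t \<nu> n x * max_reach_prob P h s m x)
    = (\<Sum>x\<in>UNIV. \<nu> x * max_reach_prob P h s (n + m) x)"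
  using assms
proof (induction n arbitrary: m)
  case 0
  then show ?case by simp
next
  case (Suc n)
  have "h - Suc (t + n) = m" "h - Suc m = t + n"
    using Suc.prems by auto
  then have "(\<Sum>x\<in>UNIV. flow P (reach_policy P h s) t \<nu> (Suc n) x * max_reach_prob P h s m x)
      = (\<Sum>x\<in>UNIV. flow P (reach_policy P h s) t \<nu> n x * max_reach_prob P h s (Suc m) x)"
    unfolding reach_policy_def by (subst sum_flow_Suc_greedy) simp_all
  also have "\<dots> = (\<Sum>x\<in>UNIV. \<nu> x * max_reach_prob P h s (n + Suc m) x)"
    by (rule Suc.IH) (use Suc.prems in auto)
  finally show ?case by simp
qed

lemma cocc_reach_policy:
  assumes "t \<le> h"
  shows "cocc P (reach_policy P h s) t s' h s = max_reach_prob P h s (h - t) s'"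
  using sum_flow_reach_policy[of t "h - t" 0 h P s "\<lambda>y. if y = s' then 1 else 0"] assms
  by (simp add: cocc_def sum_point_mass_left sum_point_mass_right)

subsection \<open>Finite-horizon dynamic programming\<close>

definition expected_reward :: "(nat \<Rightarrow> 's::finite \<Rightarrow> 'a::finite \<Rightarrow> 's \<Rightarrow> real) \<Rightarrow> ('s \<Rightarrow> real) \<Rightarrow> nat
    \<Rightarrow> (nat \<Rightarrow> 's \<Rightarrow> real) \<Rightarrow> (nat \<Rightarrow> 's \<Rightarrow> 'a \<Rightarrow> real) \<Rightarrow> real" where
  "expected_reward P \<mu> H g \<pi> = (\<Sum>t\<in>{1..H}. \<Sum>x\<in>UNIV. flow P \<pi> 1 \<mu> (t - 1) x * g t x)"

(* dp_value P H g m is the optimal expected reward collected from step H - m + 1 on. *)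
fun dp_value :: "(nat \<Rightarrow> 's::finite \<Rightarrow> 'a::finite \<Rightarrow> 's \<Rightarrow> real) \<Rightarrow> nat \<Rightarrow> (nat \<Rightarrow> 's \<Rightarrow> real)
    \<Rightarrow> nat \<Rightarrow> 's \<Rightarrow> real" where
  "dp_value P H g 0 = (\<lambda>x. 0)"
| "dp_value P H g (Suc m) = (\<lambda>x. g (H - m) x + max_q_value P (H - m) (dp_value P H g m) x)"

definition dp_policy :: "(nat \<Rightarrow> 's::finite \<Rightarrow> 'a::finite \<Rightarrow> 's \<Rightarrow> real) \<Rightarrow> nat \<Rightarrow> (nat \<Rightarrow> 's \<Rightarrow> real)
    \<Rightarrow> nat \<Rightarrow> 's \<Rightarrow> 'a \<Rightarrow> real" where
  "dp_policy P H g = greedy_policy P (\<lambda>k. dp_value P H g (H - k))"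

lemma dp_value_Suc_step:
  assumes "Suc n \<le> H"
  shows "(\<Sum>x\<in>UNIV. \<nu> x * g (Suc n) x) + (\<Sum>x\<in>UNIV. \<nu> x * max_q_value P (Suc n) (dp_value P H g (H - Suc n)) x)
    = (\<Sum>x\<in>UNIV. \<nu> x * dp_value P H g (H - n) x)"
proof -
  have "H - n = Suc (H - Suc n)" "H - (H - Suc n) = Suc n"
    using assms by auto
  then show ?thesis
    by (simp add: sum.distrib[symmetric] distrib_left)
qed

lemma dp_policy_value:
  assumes "n \<le> H"
  shows "(\<Sum>t\<in>{1..n}. \<Sum>x\<in>UNIV. flow P (dp_policy P H g) 1 \<mu> (t - 1) x * g t x)
      + (\<Sum>x\<in>UNIV. flow P (dp_policy P H g) 1 \<mu> n x * dp_value P H g (H - n) x)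
    = (\<Sum>x\<in>UNIV. \<mu> x * dp_value P H g H x)"
  using assms
proof (induction n)
  case 0
  then show ?case by simp
next
  case (Suc n)
  let ?f = "flow P (dp_policy P H g) 1 \<mu>"
  have "(\<Sum>x\<in>UNIV. ?f (Suc n) x * dp_value P H g (H - Suc n) x)
      = (\<Sum>x\<in>UNIV. ?f n x * max_q_value P (Suc n) (dp_value P H g (H - Suc n)) x)"
    unfolding dp_policy_def using Suc.prems by (subst sum_flow_Suc_greedy) simp_all
  with Suc dp_value_Suc_step[OF Suc.prems, of "?f n" g P] show ?case
    by simp
qed

locale episodic_mdp =
  fixes P :: "nat \<Rightarrow> 's::finite \<Rightarrow> 'a::finite \<Rightarrow> 's \<Rightarrow> real" and H :: nat
  assumes P_nonneg: "\<forall>h\<in>{1..H}. \<forall>s a s'. 0 \<le> P h s a s'"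
    and P_sum: "\<forall>h\<in>{1..H}. \<forall>s a. (\<Sum>s'\<in>UNIV. P h s a s') = 1"
begin

lemma flow_nonneg_markov:
  assumes "markov_policy H \<pi>" "\<And>s. 0 \<le> \<nu> s" "1 \<le> t" "t + n \<le> Suc H"
  shows "0 \<le> flow P \<pi> t \<nu> n s"
proof (rule flow_nonneg)
  fix k assume "k < n"
  then have "t + k \<in> {1..H}"
    using assms by auto
  then show "0 \<le> \<pi> (t + k) x a" "0 \<le> P (t + k) x a y" for x a y
    using markov_policy_nonneg[OF assms(1)] P_nonneg by auto
qed (rule assms(2))

lemma sum_flow_markov:
  assumes "markov_policy H \<pi>" "1 \<le> t" "t + n \<le> Suc H"
  shows "(\<Sum>s\<in>UNIV. flow P \<pi> t \<nu> n s) = (\<Sum>s\<in>UNIV. \<nu> s)"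
proof (rule sum_flow)
  fix k assume "k < n"
  then have "t + k \<in> {1..H}"
    using assms by auto
  then show "(\<Sum>a\<in>UNIV. \<pi> (t + k) x a) = 1" "(\<Sum>y\<in>UNIV. P (t + k) x a y) = 1" for x a
    using sum_markov_policy[OF assms(1)] P_sum by auto
qed

lemma flow_le_1_markov:
  assumes "markov_policy H \<pi>" "\<And>s. 0 \<le> \<nu> s" "(\<Sum>s\<in>UNIV. \<nu> s) = 1" "1 \<le> t" "t + n \<le> Suc H"
  shows "flow P \<pi> t \<nu> n s \<le> 1"
  using member_le_sum[of s UNIV "flow P \<pi> t \<nu> n"] flow_nonneg_markov[OF assms(1,2,4,5)]
    sum_flow_markov[OF assms(1,4,5)] assms(3) by auto

lemma cocc_le_max_reach_prob:
  assumes "1 \<le> t" "t \<le> h" "h \<le> H" "markov_policy H \<pi>"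
  shows "cocc P \<pi> t s' h s \<le> max_reach_prob P h s (h - t) s'"
proof -
  have "(\<Sum>x\<in>UNIV. flow P \<pi> t (\<lambda>y. if y = s' then 1 else 0) (h - t) x * max_reach_prob P h s 0 x)
      \<le> (\<Sum>x\<in>UNIV. (if x = s' then 1 else 0) * max_reach_prob P h s (h - t + 0) x)"
  proof (rule sum_flow_max_reach_prob_le)
    fix k assume "k < h - t"
    then have "t + k \<in> {1..H}"
      using assms by auto
    then show "0 \<le> \<pi> (t + k) x a" "(\<Sum>a\<in>UNIV. \<pi> (t + k) x a) = 1" "0 \<le> P (t + k) x a y" for x a y
      using markov_policy_nonneg[OF assms(4)] sum_markov_policy[OF assms(4)] P_nonneg by auto
  qed (use assms in auto)
  then show ?thesis
    by (simp add: cocc_def sum_point_mass_left sum_point_mass_right)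
qed

lemma dstar_eq_max_reach_prob:
  assumes "1 \<le> t" "t \<le> h" "h \<le> H"
  shows "dstar P H t s' h s = max_reach_prob P h s (h - t) s'"
  unfolding dstar_def
proof (rule cSup_eq_maximum)
  have "markov_policy H (reach_policy P h s)"
    unfolding reach_policy_def by (rule markov_policy_greedy_policy)
  then show "max_reach_prob P h s (h - t) s' \<in> {cocc P \<pi> t s' h s |\<pi>. markov_policy H \<pi>}"
    using cocc_reach_policy[OF assms(2), of P s s', symmetric] by blast
qed (use cocc_le_max_reach_prob[OF assms] in blast)

lemma dstar_eq_cocc_reach_policy:
  "1 \<le> t \<Longrightarrow> t \<le> h \<Longrightarrow> h \<le> H \<Longrightarrow> dstar P H t s' h s = cocc P (reach_policy P h s) t s' h s"
  by (simp add: dstar_eq_max_reach_prob cocc_reach_policy)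

lemma cocc_le_dstar:
  "1 \<le> t \<Longrightarrow> t \<le> h \<Longrightarrow> h \<le> H \<Longrightarrow> markov_policy H \<pi> \<Longrightarrow> cocc P \<pi> t s' h s \<le> dstar P H t s' h s"
  by (simp add: dstar_eq_max_reach_prob cocc_le_max_reach_prob)

lemma dstar_nonneg:
  assumes "1 \<le> t" "t \<le> h" "h \<le> H"
  shows "0 \<le> dstar P H t s' h s"
  unfolding dstar_eq_cocc_reach_policy[OF assms] cocc_def reach_policy_def
  by (rule flow_nonneg_markov) (use assms markov_policy_greedy_policy in auto)

lemma expected_reward_le_dp_policy:
  assumes "markov_policy H \<pi>" "\<And>x. 0 \<le> \<mu> x"
  shows "expected_reward P \<mu> H g \<pi> \<le> expected_reward P \<mu> H g (dp_policy P H g)"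
proof -
  have "(\<Sum>t\<in>{1..n}. \<Sum>x\<in>UNIV. flow P \<pi> 1 \<mu> (t - 1) x * g t x)
      + (\<Sum>x\<in>UNIV. flow P \<pi> 1 \<mu> n x * dp_value P H g (H - n) x)
    \<le> (\<Sum>x\<in>UNIV. \<mu> x * dp_value P H g H x)" if "n \<le> H" for n
    using that
  proof (induction n)
    case 0
    then show ?case by simp
  next
    case (Suc n)
    let ?f = "flow P \<pi> 1 \<mu>"
    have "1 + n \<in> {1..H}"
      using Suc.prems by simp
    then have "(\<Sum>x\<in>UNIV. ?f (Suc n) x * dp_value P H g (H - Suc n) x)
        \<le> (\<Sum>x\<in>UNIV. ?f n x * max_q_value P (1 + n) (dp_value P H g (H - Suc n)) x)"
      using Suc.prems assms markov_policy_nonneg[OF assms(1)] sum_markov_policy[OF assms(1)]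
      by (intro sum_flow_Suc_le flow_nonneg_markov) auto
    with Suc dp_value_Suc_step[OF Suc.prems, of "?f n" g P] show ?case
      by simp
  qed
  from this[of H] dp_policy_value[of H H P g \<mu>] show ?thesis
    by (simp add: expected_reward_def)
qed

end

definition lookahead_bound :: "(nat \<Rightarrow> 's::finite \<Rightarrow> 'a::finite \<Rightarrow> 's \<Rightarrow> real) \<Rightarrow> ('s \<Rightarrow> real) \<Rightarrow> nat
    \<Rightarrow> nat \<Rightarrow> (nat \<Rightarrow> 's \<Rightarrow> 'a \<Rightarrow> real) \<Rightarrow> (nat \<Rightarrow> 's \<Rightarrow> 'a \<Rightarrow> real) \<Rightarrow> real" where
  "lookahead_bound P \<mu> H L r \<pi> = (\<Sum>h\<in>{1..H}. \<Sum>s\<in>UNIV. \<Sum>a\<in>UNIV. r h s a *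
     (\<Sum>s'\<in>UNIV. occ P \<mu> \<pi> (tL L h) s' * dstar P H (tL L h) s' h s))"

(* The steps h with tL L h = t are exactly those whose rewards first come into view at step t. *)
definition window_reward :: "(nat \<Rightarrow> 's::finite \<Rightarrow> 'a::finite \<Rightarrow> 's \<Rightarrow> real) \<Rightarrow> nat \<Rightarrow> nat
    \<Rightarrow> (nat \<Rightarrow> 's \<Rightarrow> 'a \<Rightarrow> real) \<Rightarrow> nat \<Rightarrow> 's \<Rightarrow> real" where
  "window_reward P H L r t x =
     (\<Sum>h\<in>{h\<in>{1..H}. tL L h = t}. \<Sum>s\<in>UNIV. \<Sum>a\<in>UNIV. r h s a * dstar P H t x h s)"

definition planning_policy :: "(nat \<Rightarrow> 's::finite \<Rightarrow> 'a::finite \<Rightarrow> 's \<Rightarrow> real) \<Rightarrow> nat \<Rightarrow> nat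
    \<Rightarrow> (nat \<Rightarrow> 's \<Rightarrow> 'a \<Rightarrow> real) \<Rightarrow> nat \<Rightarrow> 's \<Rightarrow> 'a \<Rightarrow> real" where
  "planning_policy P H L r = dp_policy P H (window_reward P H L r)"

lemma lookahead_bound_eq_expected_reward:
  assumes "1 \<le> L"
  shows "lookahead_bound P \<mu> H L r \<pi> = expected_reward P \<mu> H (window_reward P H L r) \<pi>"
proof -
  let ?c = "\<lambda>h t x. \<Sum>s\<in>UNIV. \<Sum>a\<in>UNIV. r h s a * dstar P H t x h s"
  let ?F = "\<lambda>h. \<Sum>x\<in>UNIV. occ P \<mu> \<pi> (tL L h) x * ?c h (tL L h) x"
  have "(\<Sum>s\<in>UNIV. \<Sum>a\<in>UNIV. r h s a * (\<Sum>s'\<in>UNIV. occ P \<mu> \<pi> (tL L h) s' * dstar P H (tL L h) s' h s))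
      = ?F h" for h
  proof -
    have "(\<Sum>s\<in>UNIV. \<Sum>a\<in>UNIV. r h s a * (\<Sum>s'\<in>UNIV. occ P \<mu> \<pi> (tL L h) s' * dstar P H (tL L h) s' h s))
        = (\<Sum>s\<in>UNIV. \<Sum>a\<in>UNIV. \<Sum>s'\<in>UNIV. occ P \<mu> \<pi> (tL L h) s' * (r h s a * dstar P H (tL L h) s' h s))"
      by (simp add: sum_distrib_left mult.left_commute)
    also have "\<dots> = ?F h"
      by (subst sum_rotate3[symmetric]) (simp add: sum_distrib_left)
    finally show ?thesis .
  qed
  then have "lookahead_bound P \<mu> H L r \<pi> = (\<Sum>h\<in>{1..H}. ?F h)"
    unfolding lookahead_bound_def by simp
  also have "\<dots> = (\<Sum>t\<in>{1..H}. \<Sum>h\<in>{h\<in>{1..H}. tL L h = t}. ?F h)"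
    by (rule sum.group[symmetric]) (use tL_in_range[OF assms] in auto)
  also have "\<dots> = (\<Sum>t\<in>{1..H}. \<Sum>h\<in>{h\<in>{1..H}. tL L h = t}. \<Sum>x\<in>UNIV. flow P \<pi> 1 \<mu> (t - 1) x * ?c h t x)"
    by (intro sum.cong refl) (auto simp: occ_def)
  also have "\<dots> = expected_reward P \<mu> H (window_reward P H L r) \<pi>"
    unfolding expected_reward_def window_reward_def sum_distrib_left by (intro sum.cong refl sum.swap)
  finally show ?thesis .
qed

context episodic_mdp
begin

lemma lookahead_bound_le_planning_policy:
  assumes "1 \<le> L" "markov_policy H \<pi>" "\<And>x. 0 \<le> \<mu> x"
  shows "lookahead_bound P \<mu> H L r \<pi> \<le> lookahead_bound P \<mu> H L r (planning_policy P H L r)"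
  unfolding lookahead_bound_eq_expected_reward[OF assms(1)] planning_policy_def
  by (rule expected_reward_le_dp_policy[OF assms(2,3)])

lemma lookahead_bound_nonneg:
  assumes "1 \<le> L" "markov_policy H \<pi>" "\<And>x. 0 \<le> \<mu> x" "\<forall>h\<in>{1..H}. \<forall>s a. 0 \<le> r h s a"
  shows "0 \<le> lookahead_bound P \<mu> H L r \<pi>"
  unfolding lookahead_bound_def
proof (intro sum_nonneg mult_nonneg_nonneg)
  fix h s a s' assume h: "h \<in> {1..H}"
  then have "1 \<le> tL L h" "tL L h \<le> h" "h \<le> H"
    using tL_bounds(1)[OF assms(1)] tL_bounds(2) by auto
  then show "0 \<le> occ P \<mu> \<pi> (tL L h) s'" "0 \<le> dstar P H (tL L h) s' h s"
    unfolding occ_def using assms(2,3) by (auto intro!: flow_nonneg_markov dstar_nonneg)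
  show "0 \<le> r h s a"
    using assms(4) h by blast
qed

end

lemma product_prob_spaceI: "(\<And>i. prob_space (D i)) \<Longrightarrow> product_prob_space D"
  by (simp add: product_prob_space_def product_prob_space_axioms_def product_sigma_finite_def
      prob_space_imp_sigma_finite)

lemma integrable_PiM_component:
  fixes \<psi> :: "'c \<Rightarrow> real"
  assumes "\<And>i. prob_space (D i)" "h \<in> I" "integrable (D h) \<psi>"
  shows "integrable (PiM I D) (\<lambda>R. \<psi> (R h))"
proof -
  interpret product_prob_space D
    by (rule product_prob_spaceI) (rule assms(1))
  have "integrable (distr (PiM I D) (D h) (\<lambda>R. R h)) \<psi>"
    using PiM_component[OF assms(2)] assms(3) by simp
  moreover have "\<psi> \<in> borel_measurable (D h)"
    using assms(3) by auto
  ultimately show ?thesis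
    using assms(2) by (subst (asm) integrable_distr_eq) (auto intro: measurable_component_singleton)
qed

lemma integrable_PiM_component_mult:
  fixes \<psi> :: "'c \<Rightarrow> real" and \<Phi> :: "('i \<Rightarrow> 'c) \<Rightarrow> real"
  assumes "\<And>i. prob_space (D i)" "h \<in> I" "integrable (D h) \<psi>"
    and "\<Phi> \<in> borel_measurable (PiM I D)" "\<And>R. R \<in> space (PiM I D) \<Longrightarrow> \<bar>\<Phi> R\<bar> \<le> B"
  shows "integrable (PiM I D) (\<lambda>R. \<psi> (R h) * \<Phi> R)"
proof (rule Bochner_Integration.integrable_bound)
  show "integrable (PiM I D) (\<lambda>R. B * \<psi> (R h))"
    using integrable_PiM_component[where D=D and h=h and I=I and \<psi>=\<psi>, OF assms(1-3)] by simp
  show "(\<lambda>R. \<psi> (R h) * \<Phi> R) \<in> borel_measurable (PiM I D)"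
    using integrable_PiM_component[where D=D and h=h and I=I and \<psi>=\<psi>, OF assms(1-3)] assms(4) by auto
  show "AE R in PiM I D. norm (\<psi> (R h) * \<Phi> R) \<le> norm (B * \<psi> (R h))"
  proof (rule AE_I2)
    fix R assume R: "R \<in> space (PiM I D)"
    then have "\<bar>\<psi> (R h)\<bar> * \<bar>\<Phi> R\<bar> \<le> \<bar>\<psi> (R h)\<bar> * B" "0 \<le> B"
      using assms(5)[OF R] by (auto intro: mult_left_mono)
    then show "norm (\<psi> (R h) * \<Phi> R) \<le> norm (B * \<psi> (R h))"
      by (simp add: abs_mult mult.commute)
  qed
qed

lemma integral_PiM_component_mult_independent:
  fixes \<psi> :: "'c \<Rightarrow> real" and \<Phi> :: "('i \<Rightarrow> 'c) \<Rightarrow> real"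
  assumes D: "\<And>i. prob_space (D i)" and "finite I" "h \<in> I" "integrable (D h) \<psi>"
    and \<Phi>: "\<Phi> \<in> borel_measurable (PiM I D)" "\<And>R. R \<in> space (PiM I D) \<Longrightarrow> \<bar>\<Phi> R\<bar> \<le> B"
    and indep: "\<And>R R'. \<forall>j\<in>I - {h}. R j = R' j \<Longrightarrow> \<Phi> R = \<Phi> R'"
  shows "(\<integral>R. \<psi> (R h) * \<Phi> R \<partial>PiM I D) = (\<integral>w. \<psi> w \<partial>D h) * (\<integral>R. \<Phi> R \<partial>PiM I D)"
proof -
  interpret product_prob_space D
    by (rule product_prob_spaceI) (rule D)
  let ?J = "I - {h}"
  let ?merge = "\<lambda>x y. merge ?J {h} (x, y)"
  have I: "I = ?J \<union> {h}" "?J \<inter> {h} = {}"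
    using assms(3) by auto
  have \<psi>: "\<psi> \<in> borel_measurable (D h)"
    using assms(4) by auto
  have "prob_space (PiM I D)"
    by (rule prob_space_PiM) (rule D)
  then have int_\<Phi>: "integrable (PiM I D) \<Phi>"
    using \<Phi> by (intro finite_measure.integrable_const_bound[OF prob_space.finite_measure, where B=B]) auto
  define \<Psi> where "\<Psi> x = \<Phi> (?merge x (\<lambda>_. undefined))" for x
  have \<Psi>: "\<Phi> (?merge x y) = \<Psi> x" for x y
    unfolding \<Psi>_def by (rule indep) (auto simp: merge_def)
  have prob_h: "prob_space (PiM {h} D)"
    by (rule prob_space_PiM) (rule D)
  have "(\<integral>R. \<psi> (R h) * \<Phi> R \<partial>PiM I D) = (\<integral>R. \<psi> (R h) * \<Phi> R \<partial>PiM (?J \<union> {h}) D)"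
    using I by simp
  also have "\<dots> = (\<integral>x. (\<integral>y. \<psi> (?merge x y h) * \<Phi> (?merge x y) \<partial>PiM {h} D) \<partial>PiM ?J D)"
    using I assms(2) integrable_PiM_component_mult[OF D assms(3,4) \<Phi>]
    by (intro product_integral_fold) auto
  also have "\<dots> = (\<integral>x. (\<integral>y. \<psi> (y h) \<partial>PiM {h} D) * \<Psi> x \<partial>PiM ?J D)"
  proof (rule Bochner_Integration.integral_cong[OF refl])
    fix x
    have "\<psi> (?merge x y h) * \<Phi> (?merge x y) = \<psi> (y h) * \<Psi> x" for y
      by (subst \<Psi>) (simp add: merge_def)
    then show "(\<integral>y. \<psi> (?merge x y h) * \<Phi> (?merge x y) \<partial>PiM {h} D) = (\<integral>y. \<psi> (y h) \<partial>PiM {h} D) * \<Psi> x"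
      by (simp only: integral_mult_left_zero)
  qed
  also have "\<dots> = (\<integral>w. \<psi> w \<partial>D h) * (\<integral>x. \<Psi> x \<partial>PiM ?J D)"
    by (simp add: product_integral_singleton \<psi>)
  also have "(\<integral>x. \<Psi> x \<partial>PiM ?J D) = (\<integral>x. (\<integral>y. \<Phi> (?merge x y) \<partial>PiM {h} D) \<partial>PiM ?J D)"
    using prob_space.prob_space[OF prob_h] by (simp only: \<Psi>) simp
  also have "(\<integral>x. (\<integral>y. \<Phi> (?merge x y) \<partial>PiM {h} D) \<partial>PiM ?J D) = (\<integral>R. \<Phi> R \<partial>PiM (?J \<union> {h}) D)"
    using I assms(2) int_\<Phi> by (intro product_integral_fold[symmetric]) auto
  also have "\<dots> = (\<integral>R. \<Phi> R \<partial>PiM I D)"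
    using I by simp
  finally show ?thesis .
qed

lemma measurable_apply2: "(\<lambda>f::'s::finite \<Rightarrow> 'a::finite \<Rightarrow> real. f s a) \<in> borel_measurable borel"
proof -
  have "continuous_on UNIV (\<lambda>f::'s \<Rightarrow> 'a \<Rightarrow> real. f s a)"
    by (rule continuous_on_compose2[OF continuous_on_product_coordinates]) auto
  then show ?thesis by (rule borel_measurable_continuous_onI)
qed

lemma measurable_reward_law_entry:
  fixes D :: "nat \<Rightarrow> ('s::finite \<Rightarrow> 'a::finite \<Rightarrow> real) measure"
  assumes "j \<in> {1..H}" "sets (D j) = sets borel"
  shows "(\<lambda>R. R j s a) \<in> borel_measurable (reward_law H D)"
proof -
  have "(\<lambda>R. R j) \<in> measurable (reward_law H D) (D j)"
    unfolding reward_law_def by (rule measurable_component_singleton) (use assms in auto)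
  then have "(\<lambda>R. R j) \<in> measurable (reward_law H D) borel"
    by (simp add: measurable_cong_sets[OF refl assms(2)])
  then show ?thesis
    using measurable_apply2 by (rule measurable_compose)
qed

lemma (in episodic_mdp) occ_le_sum_occ_dstar:
  assumes "markov_policy H \<pi>" "\<And>s. 0 \<le> \<mu> s" "1 \<le> t" "t \<le> h" "h \<le> H"
  shows "occ P \<mu> \<pi> h s \<le> (\<Sum>s'\<in>UNIV. occ P \<mu> \<pi> t s' * dstar P H t s' h s)"
  unfolding occ_def flow_eq_sum_occ_cocc[OF assms(3,4)]
  using assms by (intro sum_mono mult_left_mono cocc_le_dstar flow_nonneg_markov) auto

locale lookahead_eval = episodic_mdp P H
  for P :: "nat \<Rightarrow> 's::finite \<Rightarrow> 'a::finite \<Rightarrow> 's \<Rightarrow> real" and H :: nat +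
  fixes \<mu> :: "'s \<Rightarrow> real" and r :: "nat \<Rightarrow> 's \<Rightarrow> 'a \<Rightarrow> real" and L :: nat
    and D :: "nat \<Rightarrow> ('s \<Rightarrow> 'a \<Rightarrow> real) measure"
    and pol :: "nat \<Rightarrow> 's \<Rightarrow> (nat \<Rightarrow> 's \<Rightarrow> 'a \<Rightarrow> real) \<Rightarrow> 'a \<Rightarrow> real"
  assumes mu_nonneg: "\<forall>s. 0 \<le> \<mu> s" and mu_sum: "(\<Sum>s\<in>UNIV. \<mu> s) = 1"
    and L_range: "1 \<le> L" "L \<le> H"
    and D_in: "D \<in> reward_dists H r"
    and pol_in: "pol \<in> lookahead_policies H L D"
begin

definition decision :: "(nat \<Rightarrow> 's \<Rightarrow> 'a \<Rightarrow> real) \<Rightarrow> nat \<Rightarrow> 's \<Rightarrow> 'a \<Rightarrow> real" where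
  "decision R h s = pol h s (window L H h R)"

definition realized_return :: "(nat \<Rightarrow> 's \<Rightarrow> 'a \<Rightarrow> real) \<Rightarrow> real" where
  "realized_return R = (\<Sum>h\<in>{1..H}. \<Sum>s\<in>UNIV. \<Sum>a\<in>UNIV.
     flow P (decision R) 1 \<mu> (h - 1) s * decision R h s a * R h s a)"

(* The factors outside {1..H} do not matter; taking D 1 there makes all of them probability spaces. *)
definition reward_factor :: "nat \<Rightarrow> ('s \<Rightarrow> 'a \<Rightarrow> real) measure" where
  "reward_factor i = (if i \<in> {1..H} then D i else D 1)"

lemma D_facts:
  assumes "i \<in> {1..H}"
  shows "prob_space (D i)" "sets (D i) = sets borel" "AE w in D i. \<forall>s a. 0 \<le> w s a"
    "integrable (D i) (\<lambda>w. w s a)" "(\<integral>w. w s a \<partial>D i) = r i s a"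
  using D_in assms by (auto simp: reward_dists_def)

lemma reward_factor_eq: "i \<in> {1..H} \<Longrightarrow> reward_factor i = D i"
  by (simp add: reward_factor_def)

lemma prob_space_reward_factor: "prob_space (reward_factor i)"
  using D_facts(1) L_range by (simp add: reward_factor_def)

lemma reward_law_eq_PiM: "reward_law H D = PiM {1..H} reward_factor"
  unfolding reward_law_def by (rule PiM_cong) (auto simp: reward_factor_def)

lemma prob_space_reward_law: "prob_space (reward_law H D)"
  unfolding reward_law_eq_PiM by (rule prob_space_PiM) (rule prob_space_reward_factor)

lemma lookahead_value_eq_integral:
  "lookahead_value P \<mu> H L D pol = (\<integral>R. realized_return R \<partial>reward_law H D)"
  unfolding lookahead_value_def realized_return_def decision_def Let_def ..

lemma markov_policy_decision: "markov_policy H (decision R)"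
  using pol_in unfolding lookahead_policies_def markov_policy_def decision_def by auto

lemma measurable_decision:
  "k \<in> {1..H} \<Longrightarrow> (\<lambda>R. decision R k x a) \<in> borel_measurable (reward_law H D)"
  using pol_in unfolding lookahead_policies_def decision_def by auto

lemma measurable_reward_entry:
  assumes "j \<in> {1..H}"
  shows "(\<lambda>R. R j s a) \<in> borel_measurable (reward_law H D)"
  by (rule measurable_reward_law_entry[where D=D, OF assms D_facts(2)[OF assms]])

lemma integrable_reward_entry:
  "j \<in> {1..H} \<Longrightarrow> integrable (reward_law H D) (\<lambda>R. R j s a)"
  unfolding reward_law_eq_PiM
  by (rule integrable_PiM_component[OF prob_space_reward_factor]) (auto simp: reward_factor_eq D_facts)

lemma AE_reward_law_nonneg: "AE R in reward_law H D. \<forall>h\<in>{1..H}. \<forall>s a. 0 \<le> R h s a"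
proof (rule AE_finite_allI)
  fix h :: nat assume h: "h \<in> {1..H}"
  have "AE w in reward_factor h. \<forall>s a. 0 \<le> w s a"
    unfolding reward_factor_eq[OF h] by (rule D_facts(3)[OF h])
  then show "AE R in reward_law H D. \<forall>s a. 0 \<le> R h s a"
    unfolding reward_law_eq_PiM by (rule AE_PiM_component[OF prob_space_reward_factor h])
qed simp

lemma measurable_flow_decision:
  "n \<le> H \<Longrightarrow> (\<lambda>R. flow P (decision R) 1 \<mu> n s) \<in> borel_measurable (reward_law H D)"
proof (induction n arbitrary: s)
  case (Suc n)
  have "(\<lambda>R. \<Sum>x\<in>UNIV. \<Sum>a\<in>UNIV. flow P (decision R) 1 \<mu> n x * decision R (1 + n) x a * P (1 + n) x a s)
      \<in> borel_measurable (reward_law H D)"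
    using Suc measurable_decision[of "1 + n"] by (intro borel_measurable_sum borel_measurable_times) auto
  then show ?case by simp
qed simp

lemma flow_decision_bounds:
  assumes "n \<le> H"
  shows "0 \<le> flow P (decision R) 1 \<mu> n s" "flow P (decision R) 1 \<mu> n s \<le> 1"
  using assms mu_nonneg mu_sum markov_policy_decision
  by (auto intro!: flow_nonneg_markov flow_le_1_markov)

lemma decision_bounds:
  "k \<in> {1..H} \<Longrightarrow> 0 \<le> decision R k x a" "k \<in> {1..H} \<Longrightarrow> decision R k x a \<le> 1"
  using markov_policy_nonneg markov_policy_le_1 markov_policy_decision by blast+

lemma measurable_realized_return: "realized_return \<in> borel_measurable (reward_law H D)"
  unfolding realized_return_def
  by (intro borel_measurable_sum borel_measurable_times measurable_flow_decision
      measurable_decision measurable_reward_entry) auto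

lemma integrable_realized_return: "integrable (reward_law H D) realized_return"
proof (rule Bochner_Integration.integrable_bound)
  show "integrable (reward_law H D) (\<lambda>R. \<Sum>h\<in>{1..H}. \<Sum>s\<in>UNIV. \<Sum>a\<in>UNIV. \<bar>R h s a\<bar>)"
    by (intro Bochner_Integration.integrable_sum Bochner_Integration.integrable_abs
        integrable_reward_entry) auto
  have "\<bar>flow P (decision R) 1 \<mu> (h - 1) s * decision R h s a * R h s a\<bar> \<le> \<bar>R h s a\<bar>"
    if "h \<in> {1..H}" for R h s a
    using that flow_decision_bounds[of "h - 1" R s] decision_bounds[OF that, of R s a]
    by (auto simp: abs_mult intro!: mult_left_le_one_le mult_le_one)
  then have "\<bar>realized_return R\<bar> \<le> (\<Sum>h\<in>{1..H}. \<Sum>s\<in>UNIV. \<Sum>a\<in>UNIV. \<bar>R h s a\<bar>)" for R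
    unfolding realized_return_def
    by (intro order_trans[OF sum_abs] sum_mono order_trans[OF sum_abs]) auto
  then show "AE R in reward_law H D. norm (realized_return R)
      \<le> norm (\<Sum>h\<in>{1..H}. \<Sum>s\<in>UNIV. \<Sum>a\<in>UNIV. \<bar>R h s a\<bar>)"
    by (auto intro!: AE_I2 order_trans[OF _ abs_ge_self])
qed (rule measurable_realized_return)

end

subsection \<open>Upper bound\<close>

context lookahead_eval
begin

lemma flow_decision_before_window:
  assumes "h \<in> {1..H}" "\<forall>j\<in>{1..H} - {h}. R j = R' j"
  shows "flow P (decision R) 1 \<mu> (tL L h - 1) = flow P (decision R') 1 \<mu> (tL L h - 1)"
proof (rule flow_cong)
  fix k assume k: "k < tL L h - 1"
  have "window L H (1 + k) R j = window L H (1 + k) R' j" for j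
  proof (cases "1 + k \<le> j \<and> j \<le> min (1 + k + L - 1) H")
    case True
    then have "j \<in> {1..H} - {h}"
      using k L_range by (auto simp: tL_def)
    then show ?thesis
      using True assms(2) by (simp add: window_def)
  next
    case False
    then show ?thesis by (simp only: window_def if_False)
  qed
  then have "window L H (1 + k) R = window L H (1 + k) R'"
    by (rule ext)
  then show "decision R (1 + k) = decision R' (1 + k)"
    unfolding decision_def by simp
qed

lemma realized_return_le:
  assumes "\<forall>h\<in>{1..H}. \<forall>s a. 0 \<le> R h s a"
  shows "realized_return R \<le> (\<Sum>h\<in>{1..H}. \<Sum>s\<in>UNIV. \<Sum>a\<in>UNIV. \<Sum>s'\<in>UNIV.
    R h s a * (occ P \<mu> (decision R) (tL L h) s' * dstar P H (tL L h) s' h s))"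
  unfolding realized_return_def
proof (intro sum_mono)
  fix h s a assume h: "h \<in> {1..H}"
  have "flow P (decision R) 1 \<mu> (h - 1) s * decision R h s a \<le> flow P (decision R) 1 \<mu> (h - 1) s"
    using h flow_decision_bounds(1) decision_bounds by (intro mult_left_le) auto
  also have "\<dots> \<le> (\<Sum>s'\<in>UNIV. occ P \<mu> (decision R) (tL L h) s' * dstar P H (tL L h) s' h s)"
    using occ_le_sum_occ_dstar[OF markov_policy_decision, where \<mu>=\<mu> and t="tL L h" and h=h and s=s] h mu_nonneg
      tL_bounds(1)[OF L_range(1)] tL_bounds(2) by (simp add: occ_def)
  finally have "flow P (decision R) 1 \<mu> (h - 1) s * decision R h s a * R h s a
      \<le> (\<Sum>s'\<in>UNIV. occ P \<mu> (decision R) (tL L h) s' * dstar P H (tL L h) s' h s) * R h s a"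
    using assms h by (intro mult_right_mono) auto
  also have "\<dots> = (\<Sum>s'\<in>UNIV. R h s a * (occ P \<mu> (decision R) (tL L h) s' * dstar P H (tL L h) s' h s))"
    by (simp add: sum_distrib_left mult_ac)
  finally show "flow P (decision R) 1 \<mu> (h - 1) s * decision R h s a * R h s a
      \<le> (\<Sum>s'\<in>UNIV. R h s a * (occ P \<mu> (decision R) (tL L h) s' * dstar P H (tL L h) s' h s))" .
qed

lemma
  assumes "h \<in> {1..H}"
  shows integrable_occ_dstar: "integrable (reward_law H D)
      (\<lambda>R. occ P \<mu> (decision R) (tL L h) s' * dstar P H (tL L h) s' h s)"
    and integrable_reward_mult_occ_dstar: "integrable (reward_law H D)
      (\<lambda>R. R h s a * (occ P \<mu> (decision R) (tL L h) s' * dstar P H (tL L h) s' h s))"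
    and integral_reward_mult_occ_dstar: "(\<integral>R. R h s a * (occ P \<mu> (decision R) (tL L h) s' * dstar P H (tL L h) s' h s)
      \<partial>reward_law H D)
      = (\<integral>R. r h s a * (occ P \<mu> (decision R) (tL L h) s' * dstar P H (tL L h) s' h s) \<partial>reward_law H D)"
proof -
  let ?d = "dstar P H (tL L h) s' h s"
  let ?\<Phi> = "\<lambda>R. occ P \<mu> (decision R) (tL L h) s' * ?d"
  have t: "1 \<le> tL L h" "tL L h \<le> h" "h \<le> H"
    using assms tL_bounds(1)[OF L_range(1)] tL_bounds(2) by auto
  have \<Phi>: "?\<Phi> \<in> borel_measurable (PiM {1..H} reward_factor)"
    unfolding reward_law_eq_PiM[symmetric] occ_def
    using measurable_flow_decision[of "tL L h - 1"] t by simp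
  have \<Phi>_bound: "\<bar>?\<Phi> R\<bar> \<le> ?d" for R
    using t flow_decision_bounds[of "tL L h - 1" R s'] dstar_nonneg[OF t, of s' s]
    by (auto simp: occ_def abs_mult intro!: mult_left_le_one_le)
  show "integrable (reward_law H D) ?\<Phi>"
    using \<Phi> \<Phi>_bound prob_space_reward_law
    by (intro finite_measure.integrable_const_bound[OF prob_space.finite_measure, where B="?d"])
      (auto simp: reward_law_eq_PiM)
  have \<psi>: "integrable (reward_factor h) (\<lambda>w. w s a)"
    using assms D_facts(4) by (simp add: reward_factor_eq)
  show "integrable (reward_law H D) (\<lambda>R. R h s a * ?\<Phi> R)"
    unfolding reward_law_eq_PiM
    by (rule integrable_PiM_component_mult[OF prob_space_reward_factor assms \<psi> \<Phi> \<Phi>_bound])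
  have "(\<integral>R. R h s a * ?\<Phi> R \<partial>reward_law H D)
      = (\<integral>w. w s a \<partial>reward_factor h) * (\<integral>R. ?\<Phi> R \<partial>PiM {1..H} reward_factor)"
    unfolding reward_law_eq_PiM
  proof (rule integral_PiM_component_mult_independent[OF prob_space_reward_factor _ assms \<psi> \<Phi> \<Phi>_bound])
    show "?\<Phi> R = ?\<Phi> R'" if "\<forall>j\<in>{1..H} - {h}. R j = R' j" for R R'
      using flow_decision_before_window[OF assms that] by (simp add: occ_def)
  qed simp
  also have "\<dots> = (\<integral>R. r h s a * ?\<Phi> R \<partial>reward_law H D)"
    using assms D_facts(5) by (simp add: reward_factor_eq reward_law_eq_PiM)
  finally show "(\<integral>R. R h s a * ?\<Phi> R \<partial>reward_law H D) = (\<integral>R. r h s a * ?\<Phi> R \<partial>reward_law H D)" .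
qed

lemma lookahead_value_le_lookahead_bound:
  "lookahead_value P \<mu> H L D pol \<le> lookahead_bound P \<mu> H L r (planning_policy P H L r)"
proof -
  let ?\<Phi> = "\<lambda>h s s' R. occ P \<mu> (decision R) (tL L h) s' * dstar P H (tL L h) s' h s"
  let ?M = "reward_law H D"
  interpret prob_space ?M
    by (rule prob_space_reward_law)
  have int: "integrable ?M (\<lambda>R. c h s a * ?\<Phi> h s s' R)" if "h \<in> {1..H}" for c :: "nat \<Rightarrow> 's \<Rightarrow> 'a \<Rightarrow> real" and h s a s'
    using integrable_occ_dstar[OF that, of s' s] by simp
  have "lookahead_value P \<mu> H L D pol \<le> (\<integral>R. (\<Sum>h\<in>{1..H}. \<Sum>s\<in>UNIV. \<Sum>a\<in>UNIV. \<Sum>s'\<in>UNIV. R h s a * ?\<Phi> h s s' R) \<partial>?M)"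
    unfolding lookahead_value_eq_integral
    using integrable_reward_mult_occ_dstar AE_reward_law_nonneg realized_return_le
    by (intro integral_mono_AE integrable_realized_return Bochner_Integration.integrable_sum) auto
  also have "\<dots> = (\<integral>R. (\<Sum>h\<in>{1..H}. \<Sum>s\<in>UNIV. \<Sum>a\<in>UNIV. \<Sum>s'\<in>UNIV. r h s a * ?\<Phi> h s s' R) \<partial>?M)"
    using int integrable_reward_mult_occ_dstar integral_reward_mult_occ_dstar
    by (simp add: Bochner_Integration.integrable_sum Bochner_Integration.integral_sum)
  also have "\<dots> \<le> (\<integral>R. lookahead_bound P \<mu> H L r (planning_policy P H L r) \<partial>?M)"
  proof (rule integral_mono)
    fix R
    have "(\<Sum>h\<in>{1..H}. \<Sum>s\<in>UNIV. \<Sum>a\<in>UNIV. \<Sum>s'\<in>UNIV. r h s a * ?\<Phi> h s s' R)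
        = lookahead_bound P \<mu> H L r (decision R)"
      unfolding lookahead_bound_def by (simp add: sum_distrib_left)
    also have "\<dots> \<le> lookahead_bound P \<mu> H L r (planning_policy P H L r)"
      using lookahead_bound_le_planning_policy[OF L_range(1) markov_policy_decision] mu_nonneg by blast
    finally show "(\<Sum>h\<in>{1..H}. \<Sum>s\<in>UNIV. \<Sum>a\<in>UNIV. \<Sum>s'\<in>UNIV. r h s a * ?\<Phi> h s s' R)
        \<le> lookahead_bound P \<mu> H L r (planning_policy P H L r)" .
  qed (use int in \<open>auto intro!: Bochner_Integration.integrable_sum\<close>)
  finally show ?thesis
    by (simp add: prob_space)
qed

end

subsection \<open>Sparse reward distributions\<close>

declare measurable_apply2 [measurable]

definition spike :: "(nat \<Rightarrow> 's::finite \<Rightarrow> 'a::finite \<Rightarrow> real) \<Rightarrow> real \<Rightarrow> nat \<Rightarrow> 's \<Rightarrow> 'a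
    \<Rightarrow> 's \<Rightarrow> 'a \<Rightarrow> real" where
  "spike r \<epsilon> h s0 a0 = (\<lambda>s a. if s = s0 \<and> a = a0 then real CARD('s \<times> 'a) * r h s0 a0 / \<epsilon> else 0)"

definition spike_weight :: "real \<Rightarrow> ('s::finite \<times> 'a::finite) option \<Rightarrow> real" where
  "spike_weight \<epsilon> z = (case z of None \<Rightarrow> 1 - \<epsilon> | Some _ \<Rightarrow> \<epsilon> / real CARD('s \<times> 'a))"

definition spike_table :: "(nat \<Rightarrow> 's::finite \<Rightarrow> 'a::finite \<Rightarrow> real) \<Rightarrow> real \<Rightarrow> nat \<Rightarrow> ('s \<times> 'a) option
    \<Rightarrow> 's \<Rightarrow> 'a \<Rightarrow> real" where
  "spike_table r \<epsilon> h z = (case z of None \<Rightarrow> (\<lambda>s a. 0) | Some (s0, a0) \<Rightarrow> spike r \<epsilon> h s0 a0)"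

definition spike_dist :: "(nat \<Rightarrow> 's::finite \<Rightarrow> 'a::finite \<Rightarrow> real) \<Rightarrow> real \<Rightarrow> nat
    \<Rightarrow> ('s \<Rightarrow> 'a \<Rightarrow> real) measure" where
  "spike_dist r \<epsilon> h = distr (measure_pmf (embed_pmf (spike_weight \<epsilon>))) borel (spike_table r \<epsilon> h)"

lemma sum_UNIV_option: "(\<Sum>z\<in>UNIV. f z) = f None + (\<Sum>x\<in>UNIV. f (Some (x::'b::finite)))"
  by (simp add: UNIV_option_conv sum.reindex)

lemma spike_weight_nonneg: "0 \<le> \<epsilon> \<Longrightarrow> \<epsilon> \<le> 1 \<Longrightarrow> 0 \<le> spike_weight \<epsilon> z"
  by (simp add: spike_weight_def split: option.split)

lemma sum_spike_weight: "(\<Sum>z\<in>UNIV. spike_weight \<epsilon> (z :: ('s::finite \<times> 'a::finite) option)) = 1"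
  by (simp add: sum_UNIV_option spike_weight_def)

lemma pmf_spike_weight:
  assumes "0 \<le> \<epsilon>" "\<epsilon> \<le> 1"
  shows "pmf (embed_pmf (spike_weight \<epsilon>)) z = spike_weight \<epsilon> (z :: ('s::finite \<times> 'a::finite) option)"
proof (rule pmf_embed_pmf)
  show nonneg: "0 \<le> spike_weight \<epsilon> x" for x :: "('s \<times> 'a) option"
    using assms by (rule spike_weight_nonneg)
  have "(\<integral>\<^sup>+x. ennreal (spike_weight \<epsilon> (x :: ('s \<times> 'a) option)) \<partial>count_space UNIV)
      = (\<Sum>x\<in>UNIV. ennreal (spike_weight \<epsilon> (x :: ('s \<times> 'a) option)))"
    by (rule nn_integral_count_space_finite) simp
  also have "\<dots> = ennreal (\<Sum>x\<in>UNIV. spike_weight \<epsilon> (x :: ('s \<times> 'a) option))"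
    by (rule sum_ennreal) (rule nonneg)
  finally show "(\<integral>\<^sup>+x. ennreal (spike_weight \<epsilon> (x :: ('s \<times> 'a) option)) \<partial>count_space UNIV) = 1"
    by (simp add: sum_spike_weight)
qed

lemma prob_space_spike_dist: "prob_space (spike_dist r \<epsilon> h)"
  unfolding spike_dist_def by (rule prob_space.prob_space_distr) (auto simp: measure_pmf.prob_space_axioms)

lemma sets_spike_dist: "sets (spike_dist r \<epsilon> h) = sets borel"
  unfolding spike_dist_def by simp

lemma integrable_spike_dist:
  fixes F :: "('s::finite \<Rightarrow> 'a::finite \<Rightarrow> real) \<Rightarrow> real"
  assumes "F \<in> borel_measurable borel"
  shows "integrable (spike_dist r \<epsilon> h) F"
  unfolding spike_dist_def using assms
  by (subst integrable_distr_eq) (auto intro: integrable_measure_pmf_finite)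

lemma integral_spike_dist:
  fixes F :: "('s::finite \<Rightarrow> 'a::finite \<Rightarrow> real) \<Rightarrow> real"
  assumes "0 \<le> \<epsilon>" "\<epsilon> \<le> 1" "F \<in> borel_measurable borel"
  shows "(\<integral>w. F w \<partial>spike_dist r \<epsilon> h) = (\<Sum>z\<in>UNIV. F (spike_table r \<epsilon> h z) * spike_weight \<epsilon> z)"
proof -
  have "(\<integral>w. F w \<partial>spike_dist r \<epsilon> h) = (\<integral>z. F (spike_table r \<epsilon> h z) \<partial>measure_pmf (embed_pmf (spike_weight \<epsilon>)))"
    unfolding spike_dist_def by (rule integral_distr) (use assms in auto)
  also have "\<dots> = (\<Sum>z\<in>UNIV. F (spike_table r \<epsilon> h z) * spike_weight \<epsilon> z)"
    by (subst integral_measure_pmf_real) (auto simp: pmf_spike_weight[OF assms(1,2)])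
  finally show ?thesis .
qed

lemma measurable_indicator_singleton:
  "indicator {v} \<in> borel_measurable (borel :: ('s::finite \<Rightarrow> 'a::finite \<Rightarrow> real) measure)"
  by (intro borel_measurable_indicator borel_closed closed_singleton)

lemma integral_spike_dist_apply:
  assumes "0 < \<epsilon>" "\<epsilon> \<le> 1"
  shows "(\<integral>w. w s a \<partial>spike_dist r \<epsilon> h) = r h s a"
proof -
  have "(\<integral>w. w s a \<partial>spike_dist r \<epsilon> h) = (\<Sum>z\<in>UNIV. spike_table r \<epsilon> h z s a * spike_weight \<epsilon> z)"
    by (rule integral_spike_dist) (use assms measurable_apply2 in auto)
  also have "\<dots> = (\<Sum>x\<in>UNIV. spike_table r \<epsilon> h (Some x) s a * spike_weight \<epsilon> (Some x))"
    by (simp add: sum_UNIV_option spike_table_def)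
  also have "\<dots> = (\<Sum>x\<in>UNIV. if x = (s, a) then r h s a else 0)"
    using assms by (intro sum.cong) (auto simp: spike_table_def spike_def spike_weight_def split: if_splits)
  finally show ?thesis by simp
qed

lemma prob_spike_dist_zero:
  assumes "0 < \<epsilon>" "\<epsilon> \<le> 1"
  shows "1 - \<epsilon> \<le> (\<integral>w. indicator {\<lambda>s a. 0} w \<partial>spike_dist r \<epsilon> h)"
proof -
  have "(\<integral>w. indicator {\<lambda>s a. 0} w \<partial>spike_dist r \<epsilon> h)
      = (\<Sum>z\<in>UNIV. indicator {\<lambda>s a. 0} (spike_table r \<epsilon> h z) * spike_weight \<epsilon> z)"
    by (rule integral_spike_dist) (use assms measurable_indicator_singleton in auto)
  also have "\<dots> = (1 - \<epsilon>) + (\<Sum>x\<in>UNIV. indicator {\<lambda>s a. 0} (spike_table r \<epsilon> h (Some x)) * spike_weight \<epsilon> (Some x))"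
    by (simp add: sum_UNIV_option spike_table_def spike_weight_def)
  also have "\<dots> \<ge> 1 - \<epsilon>"
    using assms by (intro add_increasing2 sum_nonneg) (auto simp: spike_weight_def)
  finally show ?thesis .
qed

lemma integral_spike_dist_hit:
  assumes "0 < \<epsilon>" "\<epsilon> \<le> 1" "0 \<le> r h s a"
  shows "r h s a \<le> (\<integral>w. w s a * indicator {spike r \<epsilon> h s a} w \<partial>spike_dist r \<epsilon> h)"
proof -
  let ?g = "\<lambda>z. spike_table r \<epsilon> h z s a * indicator {spike r \<epsilon> h s a} (spike_table r \<epsilon> h z) * spike_weight \<epsilon> z"
  have "r h s a = ?g (Some (s, a))"
    using assms by (simp add: spike_table_def spike_def spike_weight_def)
  also have "\<dots> \<le> (\<Sum>z\<in>UNIV. ?g z)"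
    using assms by (intro member_le_sum)
      (auto simp: spike_table_def spike_def spike_weight_def split: option.split)
  also have "\<dots> = (\<integral>w. w s a * indicator {spike r \<epsilon> h s a} w \<partial>spike_dist r \<epsilon> h)"
    by (rule integral_spike_dist[symmetric])
      (use assms measurable_apply2 measurable_indicator_singleton in \<open>auto intro!: borel_measurable_times\<close>)
  finally show ?thesis .
qed

lemma spike_dist_in_reward_dists:
  fixes r :: "nat \<Rightarrow> 's::finite \<Rightarrow> 'a::finite \<Rightarrow> real"
  assumes "0 < \<epsilon>" "\<epsilon> \<le> 1" "\<forall>h\<in>{1..H}. \<forall>s a. 0 \<le> r h s a"
  shows "spike_dist r \<epsilon> \<in> reward_dists H r"
  unfolding reward_dists_def
proof (intro CollectI ballI conjI allI)
  fix h s a assume h: "h \<in> {1..H}"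
  have "{x \<in> space borel. \<forall>s a. 0 \<le> (x::'s \<Rightarrow> 'a \<Rightarrow> real) s a} \<in> sets borel"
    by measurable
  moreover have "AE z in measure_pmf (embed_pmf (spike_weight \<epsilon>)). \<forall>s a. 0 \<le> spike_table r \<epsilon> h z s a"
    using assms h by (intro AE_I2) (auto simp: spike_table_def spike_def split: option.split)
  ultimately show "AE w in spike_dist r \<epsilon> h. \<forall>s a. 0 \<le> w s a"
    unfolding spike_dist_def by (subst AE_distr_iff) auto
  show "integrable (spike_dist r \<epsilon> h) (\<lambda>w. w s a)"
    using measurable_apply2 by (rule integrable_spike_dist)
  show "(\<integral>w. w s a \<partial>spike_dist r \<epsilon> h) = r h s a"
    using assms(1,2) by (rule integral_spike_dist_apply)
qed (simp_all add: prob_space_spike_dist sets_spike_dist)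

definition visible_rewards :: "nat \<Rightarrow> nat \<Rightarrow> nat \<Rightarrow> (nat \<Rightarrow> 's \<Rightarrow> 'a \<Rightarrow> real) \<Rightarrow> (nat \<times> 's \<times> 'a) set" where
  "visible_rewards L H k W = {(j, s, a). k \<le> j \<and> j \<le> min (k + L - 1) H \<and> W j s a \<noteq> 0}"

definition chase_rule :: "(nat \<Rightarrow> 's::finite \<Rightarrow> 'a::finite \<Rightarrow> 's \<Rightarrow> real) \<Rightarrow> (nat \<Rightarrow> 's \<Rightarrow> 'a \<Rightarrow> real)
    \<Rightarrow> nat \<Rightarrow> 's \<Rightarrow> (nat \<times> 's \<times> 'a) set \<Rightarrow> 'a \<Rightarrow> real" where
  "chase_rule P \<pi>0 k x S a = (if S = {} then \<pi>0 k x a else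
     (let j = Min (fst ` S); p = (SOME p. (j, p) \<in> S) in
      if j = k then (if a = snd p then 1 else 0) else reach_policy P j (fst p) k x a))"

definition chase_policy :: "(nat \<Rightarrow> 's::finite \<Rightarrow> 'a::finite \<Rightarrow> 's \<Rightarrow> real) \<Rightarrow> (nat \<Rightarrow> 's \<Rightarrow> 'a \<Rightarrow> real)
    \<Rightarrow> nat \<Rightarrow> nat \<Rightarrow> nat \<Rightarrow> 's \<Rightarrow> (nat \<Rightarrow> 's \<Rightarrow> 'a \<Rightarrow> real) \<Rightarrow> 'a \<Rightarrow> real" where
  "chase_policy P \<pi>0 L H k x W a = chase_rule P \<pi>0 k x (visible_rewards L H k W) a"

lemma chase_rule_nonneg: "(\<And>a. 0 \<le> \<pi>0 k x a) \<Longrightarrow> 0 \<le> chase_rule P \<pi>0 k x S a"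
  by (auto simp: chase_rule_def Let_def reach_policy_def greedy_policy_nonneg)

lemma sum_chase_rule:
  assumes "(\<Sum>a\<in>UNIV. \<pi>0 k x a) = 1"
  shows "(\<Sum>a\<in>UNIV. chase_rule P \<pi>0 k x S a) = 1"
proof (cases "S = {}")
  case False
  define j where "j = Min (fst ` S)"
  define p where "p = (SOME p. (j, p) \<in> S)"
  have "chase_rule P \<pi>0 k x S = (\<lambda>a. if j = k then (if a = snd p then 1 else 0) else reach_policy P j (fst p) k x a)"
    using False by (simp add: chase_rule_def Let_def j_def p_def fun_eq_iff)
  then show ?thesis
    by (cases "j = k") (simp_all add: reach_policy_def sum_greedy_policy)
qed (simp add: chase_rule_def assms)

lemma measurable_chase_policy:
  fixes D :: "nat \<Rightarrow> ('s::finite \<Rightarrow> 'a::finite \<Rightarrow> real) measure"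
  assumes k: "k \<in> {1..H}" and D: "\<forall>j\<in>{1..H}. sets (D j) = sets borel"
  shows "(\<lambda>R. chase_policy P \<pi>0 L H k x (window L H k R) a) \<in> borel_measurable (reward_law H D)"
proof -
  let ?M = "reward_law H D"
  define Rng where "Rng = {k..min (k + L - 1) H} \<times> (UNIV :: 's set) \<times> (UNIV :: 'a set)"
  define vis where "vis R = {p \<in> Rng. R (fst p) (fst (snd p)) (snd (snd p)) \<noteq> 0}" for R :: "nat \<Rightarrow> 's \<Rightarrow> 'a \<Rightarrow> real"
  have fin: "finite Rng"
    unfolding Rng_def by simp
  have entry: "(\<lambda>R. R (fst p) (fst (snd p)) (snd (snd p))) \<in> borel_measurable ?M" if "p \<in> Rng" for p
    using that k D by (intro measurable_reward_law_entry) (auto simp: Rng_def)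
  have "vis \<in> measurable ?M (count_space (Pow Rng))"
  proof (subst measurable_count_space_eq2[OF finite_Pow_iff[THEN iffD2, OF fin]], intro conjI ballI)
    show "vis \<in> space ?M \<rightarrow> Pow Rng"
      unfolding vis_def by auto
    fix \<beta> assume \<beta>: "\<beta> \<in> Pow Rng"
    have "Measurable.pred ?M (\<lambda>R. \<forall>p\<in>Rng. (R (fst p) (fst (snd p)) (snd (snd p)) \<noteq> 0) = (p \<in> \<beta>))"
    proof (rule pred_intros_finite(3)[OF fin])
      fix p assume "p \<in> Rng"
      note entry[OF this, measurable]
      show "Measurable.pred ?M (\<lambda>R. (R (fst p) (fst (snd p)) (snd (snd p)) \<noteq> 0) = (p \<in> \<beta>))"
        by measurable
    qed
    moreover have "vis -` {\<beta>} \<inter> space ?M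
        = {R \<in> space ?M. \<forall>p\<in>Rng. (R (fst p) (fst (snd p)) (snd (snd p)) \<noteq> 0) = (p \<in> \<beta>)}"
      using \<beta> unfolding vis_def by auto
    ultimately show "vis -` {\<beta>} \<inter> space ?M \<in> sets ?M"
      by (simp add: pred_def)
  qed
  then have "(\<lambda>R. (\<lambda>S R. chase_rule P \<pi>0 k x S a) (vis R) R) \<in> borel_measurable ?M"
    by (rule measurable_compose_countable'[rotated]) (auto intro: countable_finite fin)
  moreover have "visible_rewards L H k (window L H k R) = vis R" for R
    unfolding visible_rewards_def window_def vis_def Rng_def by auto
  ultimately show ?thesis
    by (simp add: chase_policy_def)
qed

lemma chase_policy_in_lookahead_policies:
  fixes D :: "nat \<Rightarrow> ('s::finite \<Rightarrow> 'a::finite \<Rightarrow> real) measure"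
  assumes "\<forall>j\<in>{1..H}. sets (D j) = sets borel"
    and "\<And>k x a. 0 \<le> \<pi>0 k x a" "\<And>k x. (\<Sum>a\<in>UNIV. \<pi>0 k x a) = 1"
  shows "chase_policy P \<pi>0 L H \<in> lookahead_policies H L D"
  unfolding lookahead_policies_def
proof (intro CollectI conjI ballI allI)
  fix h s W a
  show "0 \<le> chase_policy P \<pi>0 L H h s W a"
    unfolding chase_policy_def by (rule chase_rule_nonneg) (rule assms(2))
  show "(\<Sum>a\<in>UNIV. chase_policy P \<pi>0 L H h s W a) = 1"
    unfolding chase_policy_def by (rule sum_chase_rule) (rule assms(3))
next
  fix h s a assume "h \<in> {1..H}"
  then show "(\<lambda>R. chase_policy P \<pi>0 L H h s (window L H h R) a) \<in> borel_measurable (reward_law H D)"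
    using assms(1) by (rule measurable_chase_policy)
qed

subsection \<open>Lower bound\<close>

locale spike_setting = lookahead_eval P H \<mu> r L "spike_dist r \<epsilon>" "chase_policy P (planning_policy P H L r) L H"
  for P :: "nat \<Rightarrow> 's::finite \<Rightarrow> 'a::finite \<Rightarrow> 's \<Rightarrow> real" and H \<mu> r L and \<epsilon> :: real +
  assumes r_nonneg: "\<forall>h\<in>{1..H}. \<forall>s a. 0 \<le> r h s a"
    and eps: "0 < \<epsilon>" "\<epsilon> < 1"
begin

abbreviation plan :: "nat \<Rightarrow> 's \<Rightarrow> 'a \<Rightarrow> real" where
  "plan \<equiv> planning_policy P H L r"

definition reach_gain :: "nat \<Rightarrow> 's \<Rightarrow> real" where
  "reach_gain h s = (\<Sum>s'\<in>UNIV. occ P \<mu> plan (tL L h) s' * dstar P H (tL L h) s' h s)"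

definition event_weight :: "nat \<Rightarrow> 's \<Rightarrow> 'a \<Rightarrow> nat \<Rightarrow> ('s \<Rightarrow> 'a \<Rightarrow> real) \<Rightarrow> real" where
  "event_weight h s a i w = (if i = h then w s a * indicator {spike r \<epsilon> h s a} w else indicator {\<lambda>s a. 0} w)"

definition spike_event :: "nat \<Rightarrow> 's \<Rightarrow> 'a \<Rightarrow> (nat \<Rightarrow> 's \<Rightarrow> 'a \<Rightarrow> real) \<Rightarrow> bool" where
  "spike_event h s a R \<longleftrightarrow> R h = spike r \<epsilon> h s a \<and> (\<forall>i\<in>{1..H} - {h}. R i = (\<lambda>s a. 0))"

lemma reach_gain_nonneg: "h \<in> {1..H} \<Longrightarrow> 0 \<le> reach_gain h s"
  unfolding reach_gain_def occ_def
  using tL_bounds(1)[OF L_range(1), of h] tL_bounds(2)[of L h] mu_nonneg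
  by (intro sum_nonneg mult_nonneg_nonneg flow_nonneg_markov dstar_nonneg)
    (auto simp: planning_policy_def dp_policy_def markov_policy_greedy_policy)

lemma visible_rewards_spike_event:
  assumes "spike_event h s0 a0 R" "0 < r h s0 a0" "h \<in> {1..H}" "k \<in> {1..H}"
  shows "visible_rewards L H k (window L H k R) = (if k \<le> h \<and> h \<le> min (k + L - 1) H then {(h, s0, a0)} else {})"
proof -
  have nonzero: "R j s a \<noteq> 0 \<longleftrightarrow> j = h \<and> s = s0 \<and> a = a0" if "j \<in> {1..H}" for j s a
    using assms(1,2) that eps(1) by (cases "j = h") (auto simp: spike_event_def spike_def)
  have "(j, s, a) \<in> visible_rewards L H k (window L H k R)
      \<longleftrightarrow> k \<le> j \<and> j \<le> min (k + L - 1) H \<and> j = h \<and> s = s0 \<and> a = a0" for j s a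
    using nonzero[of j s a] assms(4) by (auto simp: visible_rewards_def window_def)
  then show ?thesis
    by (auto simp: set_eq_iff)
qed

lemma decision_spike_event:
  assumes "spike_event h s0 a0 R" "0 < r h s0 a0" "h \<in> {1..H}" "k \<in> {1..H}"
  shows "decision R k x a = (if k \<le> h \<and> h \<le> min (k + L - 1) H
    then (if h = k then (if a = a0 then 1 else 0) else reach_policy P h s0 k x a) else plan k x a)"
  using visible_rewards_spike_event[OF assms]
  by (simp add: decision_def chase_policy_def chase_rule_def Let_def)

lemma flow_decision_spike_event:
  assumes "spike_event h s0 a0 R" "0 < r h s0 a0" "h \<in> {1..H}"
  shows "flow P (decision R) 1 \<mu> (h - 1) s0 = reach_gain h s0"
proof -
  define t where "t = tL L h"
  have t: "1 \<le> t" "t \<le> h" "h \<le> H"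
    using assms(3) L_range by (auto simp: t_def tL_def)
  have before: "flow P (decision R) 1 \<mu> (t - 1) = flow P plan 1 \<mu> (t - 1)"
  proof (rule flow_cong)
    fix k assume "k < t - 1"
    then have "\<not> (1 + k \<le> h \<and> h \<le> min (1 + k + L - 1) H)" "1 + k \<in> {1..H}"
      using t L_range by (auto simp: t_def tL_def)
    then show "decision R (1 + k) = plan (1 + k)"
      using decision_spike_event[OF assms] by (auto simp: fun_eq_iff)
  qed
  have after: "cocc P (decision R) t x h s0 = cocc P (reach_policy P h s0) t x h s0" for x
    unfolding cocc_def
  proof (rule fun_cong[OF flow_cong])
    fix k assume "k < h - t"
    then have "t + k \<le> h \<and> h \<le> min (t + k + L - 1) H" "h \<noteq> t + k" "t + k \<in> {1..H}"
      using t L_range by (auto simp: t_def tL_def)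
    then show "decision R (t + k) = reach_policy P h s0 (t + k)"
      using decision_spike_event[OF assms] by (auto simp: fun_eq_iff)
  qed
  have "flow P (decision R) 1 \<mu> (h - 1) s0
      = (\<Sum>x\<in>UNIV. flow P (decision R) 1 \<mu> (t - 1) x * cocc P (decision R) t x h s0)"
    by (rule flow_eq_sum_occ_cocc[OF t(1,2)])
  also have "\<dots> = (\<Sum>x\<in>UNIV. occ P \<mu> plan t x * dstar P H t x h s0)"
    unfolding fun_cong[OF before] after by (simp add: occ_def dstar_eq_cocc_reach_policy[OF t])
  finally show ?thesis
    by (simp add: reach_gain_def t_def)
qed

lemma prod_event_weight:
  assumes "h \<in> {1..H}"
  shows "(\<Prod>i\<in>{1..H}. event_weight h s a i (R i)) = (if spike_event h s a R then R h s a else 0)"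
proof -
  have "(\<Prod>i\<in>{1..H}. event_weight h s a i (R i))
      = event_weight h s a h (R h) * (\<Prod>i\<in>{1..H} - {h}. indicator {\<lambda>s a. 0} (R i))"
    using assms by (simp add: prod.remove event_weight_def)
  also have "(\<Prod>i\<in>{1..H} - {h}. indicator {\<lambda>s a. 0} (R i)) = (if \<forall>i\<in>{1..H} - {h}. R i = (\<lambda>s a. 0) then 1 else (0::real))"
  proof (cases "\<forall>i\<in>{1..H} - {h}. R i = (\<lambda>s a. 0)")
    case False
    then obtain i where "i \<in> {1..H} - {h}" "R i \<noteq> (\<lambda>s a. 0)"
      by blast
    then have zero: "(\<Prod>i\<in>{1..H} - {h}. indicator {\<lambda>s a. 0} (R i)) = (0::real)"
      by (auto simp: indicator_def intro!: bexI[of _ i])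
    show ?thesis
      by (simp only: zero if_not_P[OF False])
  qed simp
  finally show ?thesis
    by (auto simp: event_weight_def spike_event_def)
qed

lemma event_weights_le_realized_return:
  assumes "\<forall>h\<in>{1..H}. \<forall>s a. 0 \<le> R h s a"
  shows "(\<Sum>h\<in>{1..H}. \<Sum>s\<in>UNIV. \<Sum>a\<in>UNIV. reach_gain h s * (\<Prod>i\<in>{1..H}. event_weight h s a i (R i)))
    \<le> realized_return R"
  unfolding realized_return_def
proof (intro sum_mono)
  fix h s a assume h: "h \<in> {1..H}"
  have return_nonneg: "0 \<le> flow P (decision R) 1 \<mu> (h - 1) s * decision R h s a * R h s a"
    using h assms flow_decision_bounds(1) decision_bounds(1) by (intro mult_nonneg_nonneg) auto
  show "reach_gain h s * (\<Prod>i\<in>{1..H}. event_weight h s a i (R i))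
      \<le> flow P (decision R) 1 \<mu> (h - 1) s * decision R h s a * R h s a"
  proof (cases "spike_event h s a R \<and> 0 < r h s a")
    case True
    then have "decision R h s a = 1" "flow P (decision R) 1 \<mu> (h - 1) s = reach_gain h s"
      using decision_spike_event[of h s a R h] flow_decision_spike_event[of h s a R] h L_range by simp_all
    then show ?thesis
      using True prod_event_weight[OF h] by simp
  next
    case False
    have "R h s a = 0" if "spike_event h s a R"
    proof -
      have "r h s a = 0"
        using False that r_nonneg h by (auto intro: antisym)
      with that show ?thesis
        by (simp add: spike_event_def spike_def)
    qed
    then have zero: "(\<Prod>i\<in>{1..H}. event_weight h s a i (R i)) = 0"
      unfolding prod_event_weight[OF h] by simp
    show ?thesis
      using return_nonneg by (simp only: zero mult_zero_right)
  qed
qed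

lemma integral_event_weights:
  assumes "h \<in> {1..H}"
  shows "r h s a * (1 - \<epsilon>) ^ (H - 1) \<le> (\<Prod>i\<in>{1..H}. \<integral>w. event_weight h s a i w \<partial>spike_dist r \<epsilon> i)"
proof -
  have "(1 - \<epsilon>) ^ (H - 1) = (\<Prod>i\<in>{1..H} - {h}. 1 - \<epsilon>)"
    using assms by simp
  also have "\<dots> \<le> (\<Prod>i\<in>{1..H} - {h}. \<integral>w. event_weight h s a i w \<partial>spike_dist r \<epsilon> i)"
  proof (rule prod_mono)
    fix i assume "i \<in> {1..H} - {h}"
    then show "0 \<le> 1 - \<epsilon> \<and> 1 - \<epsilon> \<le> (\<integral>w. event_weight h s a i w \<partial>spike_dist r \<epsilon> i)"
      using prob_spike_dist_zero[of \<epsilon> r i] eps by (simp add: event_weight_def)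
  qed
  finally have "r h s a * (1 - \<epsilon>) ^ (H - 1)
      \<le> (\<integral>w. event_weight h s a h w \<partial>spike_dist r \<epsilon> h) * (\<Prod>i\<in>{1..H} - {h}. \<integral>w. event_weight h s a i w \<partial>spike_dist r \<epsilon> i)"
    using assms eps r_nonneg integral_spike_dist_hit[of \<epsilon> r h s a]
    by (intro mult_mono) (auto simp: event_weight_def intro: order_trans[of 0 "r h s a"])
  then show ?thesis
    using assms by (simp add: prod.remove)
qed

lemma lookahead_value_ge:
  "(1 - \<epsilon>) ^ (H - 1) * lookahead_bound P \<mu> H L r plan
    \<le> lookahead_value P \<mu> H L (spike_dist r \<epsilon>) (chase_policy P plan L H)"
proof -
  let ?M = "reward_law H (spike_dist r \<epsilon>)"
  let ?w = "\<lambda>h s a R. \<Prod>i\<in>{1..H}. event_weight h s a i (R i)"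
  interpret product_prob_space "spike_dist r \<epsilon>"
    by (rule product_prob_spaceI) (rule prob_space_spike_dist)
  have int_w: "integrable (spike_dist r \<epsilon> i) (event_weight h s a i)" for h s a i
    unfolding event_weight_def
    by (intro integrable_spike_dist) (measurable, auto intro: measurable_indicator_singleton)
  have "(1 - \<epsilon>) ^ (H - 1) * lookahead_bound P \<mu> H L r plan
      \<le> (\<Sum>h\<in>{1..H}. \<Sum>s\<in>UNIV. \<Sum>a\<in>UNIV. reach_gain h s * (\<Prod>i\<in>{1..H}. \<integral>w. event_weight h s a i w \<partial>spike_dist r \<epsilon> i))"
    unfolding lookahead_bound_def reach_gain_def[symmetric] sum_distrib_left
  proof (intro sum_mono)
    fix h s a assume h: "h \<in> {1..H}"
    have "reach_gain h s * (r h s a * (1 - \<epsilon>) ^ (H - 1))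
        \<le> reach_gain h s * (\<Prod>i\<in>{1..H}. \<integral>w. event_weight h s a i w \<partial>spike_dist r \<epsilon> i)"
      using integral_event_weights[OF h] reach_gain_nonneg[OF h] by (rule mult_left_mono)
    then show "(1 - \<epsilon>) ^ (H - 1) * (r h s a * reach_gain h s)
        \<le> reach_gain h s * (\<Prod>i\<in>{1..H}. \<integral>w. event_weight h s a i w \<partial>spike_dist r \<epsilon> i)"
      by (simp add: mult_ac)
  qed
  also have "\<dots> = (\<integral>R. (\<Sum>h\<in>{1..H}. \<Sum>s\<in>UNIV. \<Sum>a\<in>UNIV. reach_gain h s * ?w h s a R) \<partial>?M)"
    unfolding reward_law_def
    by (simp add: product_integral_prod product_integrable_prod int_w
        Bochner_Integration.integral_sum Bochner_Integration.integrable_sum)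
  also have "\<dots> \<le> (\<integral>R. realized_return R \<partial>?M)"
    using AE_reward_law_nonneg event_weights_le_realized_return int_w
    by (intro integral_mono_AE integrable_realized_return Bochner_Integration.integrable_sum
        integrable_mult_right) (auto simp: reward_law_def intro: product_integrable_prod)
  finally show ?thesis
    by (simp add: lookahead_value_eq_integral)
qed

end

lemma one_minus_power_approx:
  fixes J \<delta> :: real
  assumes "0 \<le> J" "0 < \<delta>"
  obtains \<epsilon> where "0 < \<epsilon>" "\<epsilon> < 1" "J - \<delta> \<le> (1 - \<epsilon>) ^ n * J"
proof
  define \<epsilon> where "\<epsilon> = min (1/2) (\<delta> / (real n * J + 1))"
  have pos: "0 < real n * J + 1"
    using assms(1) by (simp add: add_nonneg_pos)
  show \<epsilon>: "0 < \<epsilon>" "\<epsilon> < 1"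
    using assms(2) pos by (auto simp: \<epsilon>_def)
  have "\<epsilon> \<le> \<delta> / (real n * J + 1)"
    by (simp add: \<epsilon>_def)
  then have "\<epsilon> * (real n * J + 1) \<le> \<delta>"
    using pos by (simp add: field_simps)
  then have "J - \<delta> \<le> (1 - real n * \<epsilon>) * J"
    using \<epsilon> by (simp add: algebra_simps)
  also have "\<dots> \<le> (1 - \<epsilon>) ^ n * J"
    using Bernoulli_inequality[of "- \<epsilon>" n] \<epsilon> assms(1) by (intro mult_right_mono) auto
  finally show "J - \<delta> \<le> (1 - \<epsilon>) ^ n * J" .
qed

context episodic_mdp
begin

lemma markov_policy_planning_policy: "markov_policy H (planning_policy P H L r)"
  unfolding planning_policy_def dp_policy_def by (rule markov_policy_greedy_policy)

lemma SUP_opt_lookahead_value_le: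
  assumes "\<forall>s. 0 \<le> \<mu> s" "(\<Sum>s\<in>UNIV. \<mu> s) = 1" "1 \<le> L" "L \<le> H"
  shows "(SUP D\<in>reward_dists H r. opt_lookahead_value P \<mu> H L D)
    \<le> ereal (lookahead_bound P \<mu> H L r (planning_policy P H L r))"
  unfolding opt_lookahead_value_def
proof (intro SUP_least)
  fix D pol assume "D \<in> reward_dists H r" "pol \<in> lookahead_policies H L D"
  then interpret lookahead_eval P H \<mu> r L D pol
    using assms by unfold_locales
  show "ereal (lookahead_value P \<mu> H L D pol) \<le> ereal (lookahead_bound P \<mu> H L r (planning_policy P H L r))"
    using lookahead_value_le_lookahead_bound by simp
qed

lemma SUP_opt_lookahead_value_ge:
  assumes "\<forall>s. 0 \<le> \<mu> s" "(\<Sum>s\<in>UNIV. \<mu> s) = 1" "1 \<le> L" "L \<le> H"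
    and r_nonneg: "\<forall>h\<in>{1..H}. \<forall>s a. 0 \<le> r h s a"
  shows "ereal (lookahead_bound P \<mu> H L r (planning_policy P H L r))
    \<le> (SUP D\<in>reward_dists H r. opt_lookahead_value P \<mu> H L D)"
proof (rule ereal_le_epsilon2)
  let ?J = "lookahead_bound P \<mu> H L r (planning_policy P H L r)"
  fix \<delta> :: real assume "0 < \<delta>"
  have "0 \<le> ?J"
    using assms by (intro lookahead_bound_nonneg markov_policy_planning_policy) auto
  then obtain \<epsilon> where \<epsilon>: "0 < \<epsilon>" "\<epsilon> < 1" "?J - \<delta> \<le> (1 - \<epsilon>) ^ (H - 1) * ?J"
    using \<open>0 < \<delta>\<close> by (rule one_minus_power_approx)
  have D: "spike_dist r \<epsilon> \<in> reward_dists H r"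
    using \<epsilon> r_nonneg by (intro spike_dist_in_reward_dists) auto
  have pol: "chase_policy P (planning_policy P H L r) L H \<in> lookahead_policies H L (spike_dist r \<epsilon>)"
    unfolding planning_policy_def dp_policy_def
    by (intro chase_policy_in_lookahead_policies) (simp_all add: sets_spike_dist greedy_policy_nonneg sum_greedy_policy)
  interpret spike_setting P H \<mu> r L \<epsilon>
    using assms \<epsilon> D pol by unfold_locales auto
  have "ereal (?J - \<delta>) \<le> ereal (lookahead_value P \<mu> H L (spike_dist r \<epsilon>) (chase_policy P (planning_policy P H L r) L H))"
    using \<epsilon>(3) lookahead_value_ge by simp
  also have "\<dots> \<le> (SUP D\<in>reward_dists H r. opt_lookahead_value P \<mu> H L D)"
    unfolding opt_lookahead_value_def using D pol by (blast intro: SUP_upper2)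
  finally have "ereal (?J - \<delta>) + ereal \<delta> \<le> (SUP D\<in>reward_dists H r. opt_lookahead_value P \<mu> H L D) + ereal \<delta>"
    by (rule add_right_mono)
  then show "ereal ?J \<le> (SUP D\<in>reward_dists H r. opt_lookahead_value P \<mu> H L D) + ereal \<delta>"
    by simp
qed

end

theorem proposition1:
  fixes P :: "nat \<Rightarrow> 's::finite \<Rightarrow> 'a::finite \<Rightarrow> 's \<Rightarrow> real"
    and mu :: "'s \<Rightarrow> real"
    and r :: "nat \<Rightarrow> 's \<Rightarrow> 'a \<Rightarrow> real"
    and H L :: nat
  assumes P_nonneg: "\<forall>h\<in>{1..H}. \<forall>s a s'. 0 \<le> P h s a s'"
    and P_sum: "\<forall>h\<in>{1..H}. \<forall>s a. (\<Sum>s'\<in>UNIV. P h s a s') = 1"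
    and mu_nonneg: "\<forall>s. 0 \<le> mu s"
    and mu_sum: "(\<Sum>s\<in>UNIV. mu s) = 1"
    and r_nonneg: "\<forall>h\<in>{1..H}. \<forall>s a. 0 \<le> r h s a"
    and L_range: "1 \<le> L" "L \<le> H"
  shows "\<exists>\<pi>0. markov_policy H \<pi>0 \<and>
    (\<forall>\<pi>. markov_policy H \<pi> \<longrightarrow>
       (\<Sum>h\<in>{1..H}. \<Sum>s\<in>UNIV. \<Sum>a\<in>UNIV. r h s a *
          (\<Sum>s'\<in>UNIV. occ P mu \<pi> (tL L h) s' * dstar P H (tL L h) s' h s))
       \<le> (\<Sum>h\<in>{1..H}. \<Sum>s\<in>UNIV. \<Sum>a\<in>UNIV. r h s a *
          (\<Sum>s'\<in>UNIV. occ P mu \<pi>0 (tL L h) s' * dstar P H (tL L h) s' h s))) \<and>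
    (SUP D\<in>reward_dists H r. opt_lookahead_value P mu H L D) =
      ereal (\<Sum>h\<in>{1..H}. \<Sum>s\<in>UNIV. \<Sum>a\<in>UNIV. r h s a *
          (\<Sum>s'\<in>UNIV. occ P mu \<pi>0 (tL L h) s' * dstar P H (tL L h) s' h s))"
proof -
  interpret episodic_mdp P H
    using P_nonneg P_sum by unfold_locales
  let ?\<pi>0 = "planning_policy P H L r"
  have "lookahead_bound P mu H L r \<pi> \<le> lookahead_bound P mu H L r ?\<pi>0" if "markov_policy H \<pi>" for \<pi>
    using lookahead_bound_le_planning_policy[OF L_range(1) that] mu_nonneg by blast
  moreover have "(SUP D\<in>reward_dists H r. opt_lookahead_value P mu H L D) = ereal (lookahead_bound P mu H L r ?\<pi>0)"
    using SUP_opt_lookahead_value_le SUP_opt_lookahead_value_ge assms by (intro antisym) auto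
  ultimately show ?thesis
    using markov_policy_planning_policy unfolding lookahead_bound_def by blast
qed
end
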